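(* Let $n>1$, $\mathcal D=(0,1)^n$, integers $\ell_0\ge2$ and $L>\ell_0$, and constants $\eta,\rho\in\mathbb R$, $\boldsymbol\beta\in\mathbb R^n$. Let $a(u,v)=\int_{\mathcal D}(\eta\nabla u\cdot\overline{\nabla v}+\boldsymbol\beta\cdot\nabla u\,\bar v+\rho u\bar v)$ and $\mu_{\mathbf q}=\sup_{\mathbf j\in\mathcal J^{\rm iso}}|a(\widehat\psi^{\rm iso}_{\mathbf j},\widehat\xi_{\mathbf q})|^2$, $\mathbf q\in\mathbb Z^n$ (see context). Then $$\mu_{\mathbf 0}\lesssim|\rho|^2 2^{-(2+n)\ell_0},$$ and for all $\mathbf q\ne\mathbf 0$, $$\mu_{\mathbf q}\lesssim\Big(|\eta|^2+\frac{\|\boldsymbol\beta\|_2^2}{\|\mathbf q\|_2^2}+\frac{|\rho|^2}{\|\mathbf q\|_2^4}\Big)\min\Big\{\frac{(1+2^{2(-\frac n2+2\|\mathbf q\|_0-1)L})\|\mathbf q\|_2^2}{|\widehat{\mathbf q}|^{\mathbf 4}},\ \frac{2^{-(n-\|\mathbf q\|_0)\ell_0}\|\mathbf q\|_2^2}{\|\mathbf q\|_\infty^2|\widehat{\mathbf q}|^{\mathbf 1}}\Big\},$$ with hidden constants depending exponentially on $n$ (and not on $\mathbf q$, $L$ or the coefficients).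
   Context: 1D functions: $\varphi(x)=\max\{0,1-|x|\}$, $\psi(x)=\sum_{j=-1}^3b_j\varphi(2x-j)$ with $(b_{-1},\dots,b_3)=(\tfrac14,\tfrac12,-\tfrac32,\tfrac12,\tfrac14)$ (biorthogonal B-spline wavelets of order $(2,2)$), $\varphi_{\ell,k}=2^{\ell/2}\varphi(2^\ell\cdot-k)$, $\psi_{\ell,k}=2^{\ell/2}\psi(2^\ell\cdot-k)$, 1-periodized ($f^{\rm per}(x)=\sum_jf(x+j)$) on $(0,1)$. $\vartheta_{\ell,k,0}=\varphi_{\ell,k}$, $\vartheta_{\ell,k,1}=\psi_{\ell,k}$, $\psi^{\rm iso}_{\ell,\mathbf k,\mathbf e}(\mathbf x)=\prod_j\vartheta_{\ell,k_j,e_j}(x_j)$, indexed by $\mathbf j=(\ell,\mathbf k,\mathbf e)\in\mathcal J^{\rm iso}=\{\ell\in\mathbb N,\ \ell_0\le\ell<L,\ \mathbf k\in(\mathbb Z/(2^\ell\mathbb Z))^n,\ \mathbf e\in\{0,1\}^n\}$, normalized $\widehat\psi^{\rm iso}_{\mathbf j}=2^{-\ell}\psi^{\rm iso}_{\mathbf j}$. $\xi_{\mathbf q}(\mathbf x)=e^{2\pi i\mathbf q\cdot\mathbf x}$, $\widehat\xi_{\mathbf q}=(1+(2\pi\|\mathbf q\|_2)^2)^{-1/2}\xi_{\mathbf q}$. Notation: $\|\mathbf q\|_0$ = number of nonzero entries, $\widehat{\mathbf q}$ = restriction to nonzero entries, $|\mathbf x|^{\mathbf y}=\prod_j|x_j|^{y_j}$,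 $\mathbf 1,\mathbf 4$ constant vectors. *)

theory Defs
  imports "HOL-Analysis.Analysis"
begin

section \<open>1D biorthogonal B-spline wavelets of order (2,2), periodized\<close>

definition hat_phi :: "real \<Rightarrow> real" where
  "hat_phi x = max 0 (1 - \<bar>x\<bar>)"

definition wav_psi :: "real \<Rightarrow> real" where
  "wav_psi x = (1/4) * hat_phi (2*x + 1) + (1/2) * hat_phi (2*x)
              - (3/2) * hat_phi (2*x - 1) + (1/2) * hat_phi (2*x - 2)
              + (1/4) * hat_phi (2*x - 3)"

definition periodize :: "(real \<Rightarrow> real) \<Rightarrow> real \<Rightarrow> real" where
  "periodize f x = (\<Sum>\<^sub>\<infinity> j::int. f (x + of_int j))"

definition theta :: "nat \<Rightarrow> int \<Rightarrow> nat \<Rightarrow> real \<Rightarrow> real" where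
  "theta l k e = periodize (\<lambda>x. 2 powr (real l / 2) *
      (if e = 0 then hat_phi else wav_psi) (2 ^ l * x - of_int k))"

text \<open>Points of R^n are functions nat => real, only coordinates i < n matter.\<close>

definition psi_iso :: "nat \<Rightarrow> nat \<Rightarrow> (nat \<Rightarrow> int) \<Rightarrow> (nat \<Rightarrow> nat) \<Rightarrow> (nat \<Rightarrow> real) \<Rightarrow> complex" where
  "psi_iso n l k e x = complex_of_real (\<Prod>j<n. theta l (k j) (e j) (x j))"

definition psi_iso_hat :: "nat \<Rightarrow> nat \<Rightarrow> (nat \<Rightarrow> int) \<Rightarrow> (nat \<Rightarrow> nat) \<Rightarrow> (nat \<Rightarrow> real) \<Rightarrow> complex" where
  "psi_iso_hat n l k e x = complex_of_real (2 powr (- real l)) * psi_iso n l k e x"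

text \<open>Index set J^iso: l0 <= l < L, k in (Z/2^l Z)^n (representatives 0..2^l-1), e in {0,1}^n\<close>
definition J_iso :: "nat \<Rightarrow> nat \<Rightarrow> nat \<Rightarrow> (nat \<times> (nat \<Rightarrow> int) \<times> (nat \<Rightarrow> nat)) set" where
  "J_iso n l0 L = {(l, k, e). l0 \<le> l \<and> l < L \<and>
       k \<in> (\<Pi>\<^sub>E i\<in>{..<n}. {0..<2 ^ l}) \<and> e \<in> (\<Pi>\<^sub>E i\<in>{..<n}. {0, 1})}"

definition qnorm2_sq :: "nat \<Rightarrow> (nat \<Rightarrow> int) \<Rightarrow> real" where
  "qnorm2_sq n q = (\<Sum>i<n. (real_of_int (q i))\<^sup>2)"

definition xi :: "nat \<Rightarrow> (nat \<Rightarrow> int) \<Rightarrow> (nat \<Rightarrow> real) \<Rightarrow> complex" where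
  "xi n q x = exp (2 * pi * \<i> * complex_of_real (\<Sum>i<n. real_of_int (q i) * x i))"

definition xi_hat :: "nat \<Rightarrow> (nat \<Rightarrow> int) \<Rightarrow> (nat \<Rightarrow> real) \<Rightarrow> complex" where
  "xi_hat n q x = complex_of_real ((1 + (2 * pi) ^ 2 * qnorm2_sq n q) powr (-1/2)) * xi n q x"

definition dom_D :: "nat \<Rightarrow> (nat \<Rightarrow> real) set" where
  "dom_D n = (\<Pi>\<^sub>E i\<in>{..<n}. {0<..<1})"

definition leb_n :: "nat \<Rightarrow> (nat \<Rightarrow> real) measure" where
  "leb_n n = completion (\<Pi>\<^sub>M i\<in>{..<n}. lborel)"

text \<open>i-th partial derivative (exists a.e. for the piecewise smooth functions considered)\<close>
definition pderiv_i :: "nat \<Rightarrow> ((nat \<Rightarrow> real) \<Rightarrow> complex) \<Rightarrow> (nat \<Rightarrow> real) \<Rightarrow> complex" where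
  "pderiv_i i u x = vector_derivative (\<lambda>t. u (x(i := t))) (at (x i))"

definition bil :: "nat \<Rightarrow> real \<Rightarrow> (nat \<Rightarrow> real) \<Rightarrow> real \<Rightarrow>
     ((nat \<Rightarrow> real) \<Rightarrow> complex) \<Rightarrow> ((nat \<Rightarrow> real) \<Rightarrow> complex) \<Rightarrow> complex" where
  "bil n \<eta> \<beta> \<rho> u v = (LINT x : dom_D n | leb_n n.
      complex_of_real \<eta> * (\<Sum>i<n. pderiv_i i u x * cnj (pderiv_i i v x))
    + (\<Sum>i<n. complex_of_real (\<beta> i) * pderiv_i i u x) * cnj (v x)
    + complex_of_real \<rho> * u x * cnj (v x))"

definition mu :: "nat \<Rightarrow> nat \<Rightarrow> nat \<Rightarrow> real \<Rightarrow> (nat \<Rightarrow> real) \<Rightarrow> real \<Rightarrow> (nat \<Rightarrow> int) \<Rightarrow> real" where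
  "mu n l0 L \<eta> \<beta> \<rho> q = (SUP j \<in> J_iso n l0 L. (case j of (l, k, e) \<Rightarrow>
      (cmod (bil n \<eta> \<beta> \<rho> (psi_iso_hat n l k e) (xi_hat n q)))\<^sup>2))"

definition qnorm0 :: "nat \<Rightarrow> (nat \<Rightarrow> int) \<Rightarrow> nat" where
  "qnorm0 n q = card {i. i < n \<and> q i \<noteq> 0}"

definition qnorm_inf :: "nat \<Rightarrow> (nat \<Rightarrow> int) \<Rightarrow> real" where
  "qnorm_inf n q = Max ((\<lambda>i. \<bar>real_of_int (q i)\<bar>) ` {..<n})"

text \<open>|q^|^y for the constant vector y = (p,...,p): product over nonzero entries\<close>
definition qhat_pow :: "nat \<Rightarrow> (nat \<Rightarrow> int) \<Rightarrow> nat \<Rightarrow> real" where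
  "qhat_pow n q p = (\<Prod>i\<in>{i. i < n \<and> q i \<noteq> 0}. \<bar>real_of_int (q i)\<bar> ^ p)"

end

theory Submission
  imports Defs
begin

(* Both the wavelet and the Fourier mode are tensor products, so after one integration by
   parts per coordinate the bilinear form factorizes:
     a(psi_j, xi_q) = 2^-l N_q (4 pi^2 eta |q|^2 + rho + 2 pi i beta.q) * prod_i c_i,
   where N_q = (1 + 4 pi^2 |q|^2)^(-1/2) and c_i is the q_i-th Fourier coefficient on [0,1] of the
   one-dimensional factor theta.  Writing theta as a combination of hats gives |c_i| <= 2 * 2^(-l/2),
   and integrating twice by parts against the piecewise affine hats gives
   |c_i| <= 2 * 2^(3l/2) / q_i^2 when q_i <> 0.  By Cauchy-Schwarz the symbol factor is at most
   8 pi^2 |q|^2 (eta^2 + |beta|^2/|q|^2 + rho^2/|q|^4).  Using the decay bound in every nonzero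
   coordinate yields the first term of the minimum, which can grow with the level only up to L;
   using |c_i|^2 <= 4/|q_i| instead and letting the largest frequency absorb the factor 2^(2l)
   yields the second term, which decreases with the level and is therefore largest at l0.
   For q = 0 only the rho-term survives and |c_i|^2 <= 4 * 2^(-l). *)

section \<open>The hat function and the two generators\<close>

definition hat_phi_deriv :: "real \<Rightarrow> real" where
  "hat_phi_deriv y = (if -1 < y \<and> y < 0 then 1 else if 0 < y \<and> y < 1 then -1 else 0)"

lemma continuous_on_hat_phi [continuous_intros]: "continuous_on S hat_phi"
  unfolding hat_phi_def[abs_def] by (intro continuous_intros)

lemma hat_phi_eq_0: "\<not> (-1 < y \<and> y < 1) \<Longrightarrow> hat_phi y = 0"
  by (auto simp: hat_phi_def)

lemma hat_phi_nonneg: "0 \<le> hat_phi y"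
  by (simp add: hat_phi_def)

lemma hat_phi_le_1: "hat_phi y \<le> 1"
  by (simp add: hat_phi_def)

lemma abs_hat_phi_deriv_le: "\<bar>hat_phi_deriv y\<bar> \<le> 1"
  by (simp add: hat_phi_deriv_def)

lemma borel_measurable_hat_phi_deriv [measurable]: "hat_phi_deriv \<in> borel_measurable borel"
  unfolding hat_phi_deriv_def by measurable

lemma hat_phi_has_real_derivative:
  assumes "y \<noteq> -1" "y \<noteq> 0" "y \<noteq> 1"
  shows "(hat_phi has_real_derivative hat_phi_deriv y) (at y)"
proof -
  have local_affine: "(hat_phi has_real_derivative d) (at y)"
    if "y \<in> S" "open S" "\<And>x. x \<in> S \<Longrightarrow> hat_phi x = c + d * x" for S c d
  proof -
    have "((\<lambda>x. c + d * x) has_real_derivative d) (at y)"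
      by (auto intro!: derivative_eq_intros)
    then show ?thesis
      by (rule has_field_derivative_transform_within_open[OF _ that(2,1)]) (use that(3) in auto)
  qed
  consider "y < -1" | "-1 < y \<and> y < 0" | "0 < y \<and> y < 1" | "1 < y"
    using assms by linarith
  then show ?thesis
  proof cases
    case 1
    then show ?thesis
      using local_affine[of "{..< -1}" 0 0] by (auto simp: hat_phi_def hat_phi_deriv_def)
  next
    case 2
    then show ?thesis
      using local_affine[of "{-1<..<0}" 1 1] by (auto simp: hat_phi_def hat_phi_deriv_def)
  next
    case 3
    then show ?thesis
      using local_affine[of "{0<..<1}" 1 "-1"] by (auto simp: hat_phi_def hat_phi_deriv_def)
  next
    case 4
    then show ?thesis
      using local_affine[of "{1<..}" 0 0] by (auto simp: hat_phi_def hat_phi_deriv_def)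
  qed
qed

text \<open>Both generators are combinations of dilated hats: \<open>e = 0\<close> gives \<open>\<phi>\<close> itself and
  \<open>e = 1\<close> gives \<open>\<psi>(y) = \<Sum>\<^sub>r b\<^sub>r \<phi>(2y - r)\<close>.\<close>

definition refine_scale :: "nat \<Rightarrow> real" where
  "refine_scale e = (if e = 0 then 1 else 2)"

definition refine_shifts :: "nat \<Rightarrow> int set" where
  "refine_shifts e = (if e = 0 then {0} else {-1, 0, 1, 2, 3})"

definition refine_weight :: "nat \<Rightarrow> int \<Rightarrow> real" where
  "refine_weight e r =
     (if e = 0 then 1
      else if r = -1 then 1/4 else if r = 0 then 1/2 else if r = 1 then -3/2
      else if r = 2 then 1/2 else 1/4)"

definition generator :: "nat \<Rightarrow> real \<Rightarrow> real" where
  "generator e y =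
     (\<Sum>r\<in>refine_shifts e. refine_weight e r * hat_phi (refine_scale e * y - of_int r))"

definition generator_deriv :: "nat \<Rightarrow> real \<Rightarrow> real" where
  "generator_deriv e y =
     (\<Sum>r\<in>refine_shifts e.
        refine_weight e r * (hat_phi_deriv (refine_scale e * y - of_int r) * refine_scale e))"

definition generator_kinks :: "real set" where
  "generator_kinks = {-1, -1/2, 0, 1/2, 1, 3/2, 2}"

lemma finite_refine_shifts [simp]: "finite (refine_shifts e)"
  by (simp add: refine_shifts_def)

lemma refine_shifts_bounds: "r \<in> refine_shifts e \<Longrightarrow> -1 \<le> r \<and> r \<le> 3"
  by (auto simp: refine_shifts_def split: if_splits)

lemma refine_scale_pos: "0 < refine_scale e"
  by (simp add: refine_scale_def)

lemma sum_abs_refine_weight: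
  "(\<Sum>r\<in>refine_shifts e. \<bar>refine_weight e r\<bar>) = (if e = 0 then 1 else 3)"
  by (simp add: refine_shifts_def refine_weight_def)

lemma generator_eq: "(if e = 0 then hat_phi else wav_psi) = generator e"
  by (rule ext)
     (auto simp: generator_def refine_shifts_def refine_weight_def refine_scale_def wav_psi_def)

lemma generator_eq_0:
  assumes "\<not> (-1 < y \<and> y < 2)"
  shows "generator e y = 0"
  unfolding generator_def
proof (rule sum.neutral, intro ballI)
  fix r assume r: "r \<in> refine_shifts e"
  have "-1 \<le> real_of_int r" "real_of_int r \<le> 3"
    using refine_shifts_bounds[OF r] by auto
  then have "\<not> (-1 < refine_scale e * y - of_int r \<and> refine_scale e * y - of_int r < 1)"
    using r assms by (auto simp: refine_shifts_def refine_scale_def split: if_splits)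
  then show "refine_weight e r * hat_phi (refine_scale e * y - of_int r) = 0"
    by (simp add: hat_phi_eq_0)
qed

lemma generator_has_real_derivative:
  assumes "y \<notin> generator_kinks"
  shows "(generator e has_real_derivative generator_deriv e y) (at y)"
  unfolding generator_def[abs_def] generator_deriv_def
proof (intro DERIV_sum DERIV_cmult)
  fix r assume r: "r \<in> refine_shifts e"
  have "r = -1 \<or> r = 0 \<or> r = 1 \<or> r = 2 \<or> r = 3"
    using refine_shifts_bounds[OF r] by auto
  then have kink: "refine_scale e * y - of_int r \<noteq> -1" "refine_scale e * y - of_int r \<noteq> 0"
      "refine_scale e * y - of_int r \<noteq> 1"
    using assms r unfolding generator_kinks_def
    by (cases "e = 0"; auto simp: field_simps refine_scale_def refine_shifts_def)+
  have affine: "((\<lambda>y. refine_scale e * y - of_int r) has_real_derivative refine_scale e) (at y)"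
    by (auto intro!: derivative_eq_intros)
  show "((\<lambda>y. hat_phi (refine_scale e * y - of_int r)) has_real_derivative
      hat_phi_deriv (refine_scale e * y - of_int r) * refine_scale e) (at y)"
    using DERIV_chain2[OF hat_phi_has_real_derivative[OF kink] affine] .
qed

lemma continuous_on_generator [continuous_intros]: "continuous_on S (generator e)"
  unfolding generator_def[abs_def]
  by (intro continuous_intros continuous_on_compose2[OF continuous_on_hat_phi]) auto

lemma borel_measurable_generator_deriv [measurable]:
  "generator_deriv e \<in> borel_measurable borel"
  unfolding generator_deriv_def[abs_def] by measurable

lemma abs_generator_le: "\<bar>generator e y\<bar> \<le> 3"
proof -
  have "\<bar>generator e y\<bar> \<le> (\<Sum>r\<in>refine_shifts e. \<bar>refine_weight e r\<bar>)"
    unfolding generator_def using hat_phi_nonneg hat_phi_le_1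
    by (intro order_trans[OF sum_abs] sum_mono) (simp add: abs_mult mult_left_le)
  then show ?thesis by (simp add: sum_abs_refine_weight split: if_splits)
qed

lemma abs_generator_deriv_le: "\<bar>generator_deriv e y\<bar> \<le> 6"
proof -
  have "\<bar>generator_deriv e y\<bar> \<le> (\<Sum>r\<in>refine_shifts e. \<bar>refine_weight e r\<bar> * 2)"
    unfolding generator_deriv_def
  proof (intro order_trans[OF sum_abs] sum_mono)
    fix r
    have "\<bar>hat_phi_deriv (refine_scale e * y - of_int r) * refine_scale e\<bar> \<le> 1 * 2"
      unfolding abs_mult using abs_hat_phi_deriv_le
      by (intro mult_mono) (auto simp: refine_scale_def)
    then show "\<bar>refine_weight e r * (hat_phi_deriv (refine_scale e * y - of_int r) * refine_scale e)\<bar>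
        \<le> \<bar>refine_weight e r\<bar> * 2"
      by (simp add: abs_mult mult_left_mono)
  qed
  also have "\<dots> \<le> 6"
    by (simp add: sum_distrib_right[symmetric] sum_abs_refine_weight)
  finally show ?thesis .
qed

section \<open>The periodized generators on the unit interval\<close>

text \<open>On \<open>[0,1]\<close> the periodization of a generator supported in \<open>[-1,2]\<close> only sees the
  three translates \<open>j \<in> {-1,0,1}\<close>.\<close>

definition theta_window :: "nat \<Rightarrow> int \<Rightarrow> nat \<Rightarrow> real \<Rightarrow> real" where
  "theta_window l k e x =
     (\<Sum>j\<in>{-1,0,1::int}. 2 powr (real l / 2) * generator e (2 ^ l * (x + of_int j) - of_int k))"

definition theta_deriv :: "nat \<Rightarrow> int \<Rightarrow> nat \<Rightarrow> real \<Rightarrow> real" where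
  "theta_deriv l k e x =
     (\<Sum>j\<in>{-1,0,1::int}.
        2 powr (real l / 2) * (generator_deriv e (2 ^ l * (x + of_int j) - of_int k) * 2 ^ l))"

definition theta_kinks :: "nat \<Rightarrow> int \<Rightarrow> real set" where
  "theta_kinks l k = (\<lambda>(j, y). (y + of_int k) / 2 ^ l - of_int j) ` ({-1,0,1::int} \<times> generator_kinks)"

lemma finite_theta_kinks [simp]: "finite (theta_kinks l k)"
  by (simp add: theta_kinks_def generator_kinks_def)

lemma real_of_int_dyadic_index_bounds:
  assumes "0 \<le> k" "k < (2::int) ^ l"
  shows "0 \<le> real_of_int k" "real_of_int k + 1 \<le> 2 ^ l"
proof -
  have "k + 1 \<le> 2 ^ l" using assms by simp
  then have "real_of_int (k + 1) \<le> real_of_int (2 ^ l)" by (simp only: of_int_le_iff)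
  then show "real_of_int k + 1 \<le> 2 ^ l" by simp
qed (use assms in simp)

lemma generator_dilated_eq_0:
  assumes k: "0 \<le> k" "k < 2 ^ l" and y: "y \<le> -1 \<or> 2 \<le> y"
  shows "generator e (2 ^ l * y - of_int k) = 0"
proof (rule generator_eq_0)
  note k' = real_of_int_dyadic_index_bounds[OF k]
  have p: "(1::real) \<le> 2 ^ l" by simp
  from y show "\<not> (- 1 < 2 ^ l * y - of_int k \<and> 2 ^ l * y - of_int k < 2)"
  proof
    assume "y \<le> -1"
    then have "2 ^ l * y \<le> 2 ^ l * (-1::real)" by (intro mult_left_mono) auto
    then show ?thesis using k' p by linarith
  next
    assume "2 \<le> y"
    then have "2 ^ l * 2 \<le> 2 ^ l * (y::real)" by (intro mult_left_mono) auto
    then show ?thesis using k' p by linarith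
  qed
qed

lemma theta_eq_theta_window:
  assumes k: "0 \<le> k" "k < 2 ^ l" and x: "0 \<le> x" "x \<le> 1"
  shows "theta l k e x = theta_window l k e x"
proof -
  have "theta l k e x =
      (\<Sum>\<^sub>\<infinity>j\<in>UNIV. 2 powr (real l / 2) * generator e (2 ^ l * (x + of_int j) - of_int k))"
    by (simp add: theta_def generator_eq periodize_def)
  also have "\<dots> =
      (\<Sum>\<^sub>\<infinity>j\<in>{-1,0,1::int}. 2 powr (real l / 2) * generator e (2 ^ l * (x + of_int j) - of_int k))"
  proof (rule infsum_cong_neutral)
    fix j :: int assume "j \<in> UNIV - {-1,0,1}"
    then have "real_of_int j \<le> -2 \<or> 2 \<le> real_of_int j" by auto
    then have "x + of_int j \<le> -1 \<or> 2 \<le> x + of_int j" using x by auto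
    then show "2 powr (real l / 2) * generator e (2 ^ l * (x + of_int j) - of_int k) = 0"
      using generator_dilated_eq_0[OF k] by simp
  qed auto
  also have "\<dots> = theta_window l k e x"
    by (subst infsum_finite) (auto simp: theta_window_def)
  finally show ?thesis .
qed

lemma theta_1_eq_theta_0:
  assumes k: "0 \<le> k" "k < 2 ^ l"
  shows "theta l k e 1 = theta l k e 0"
  using generator_dilated_eq_0[OF k, of 2 e] generator_dilated_eq_0[OF k, of "-1" e]
  by (simp add: theta_eq_theta_window[OF k] theta_window_def)

lemma continuous_on_theta_window [continuous_intros]: "continuous_on S (theta_window l k e)"
  unfolding theta_window_def[abs_def]
  by (intro continuous_intros continuous_on_compose2[OF continuous_on_generator[of UNIV]]) auto

lemma continuous_on_theta:
  assumes k: "0 \<le> k" "k < 2 ^ l"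
  shows "continuous_on {0..1} (theta l k e)"
  using continuous_on_theta_window
  by (rule continuous_on_eq) (auto simp: theta_eq_theta_window[OF k])

lemma theta_window_has_real_derivative:
  assumes "x \<notin> theta_kinks l k"
  shows "(theta_window l k e has_real_derivative theta_deriv l k e x) (at x)"
  unfolding theta_window_def[abs_def] theta_deriv_def
proof (intro DERIV_sum DERIV_cmult)
  fix j :: int assume j: "j \<in> {-1,0,1}"
  have "2 ^ l * (x + of_int j) - of_int k \<notin> generator_kinks"
  proof
    assume "2 ^ l * (x + of_int j) - of_int k \<in> generator_kinks"
    then have "x \<in> theta_kinks l k" unfolding theta_kinks_def using j
      by (auto intro!: image_eqI[where x="(j, 2 ^ l * (x + of_int j) - of_int k)"] simp: field_simps)
    with assms show False by simp
  qed
  moreover have "((\<lambda>x. 2 ^ l * (x + of_int j) - of_int k) has_real_derivative 2 ^ l) (at x)"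
    by (auto intro!: derivative_eq_intros)
  ultimately show "((\<lambda>x. generator e (2 ^ l * (x + of_int j) - of_int k)) has_real_derivative
      generator_deriv e (2 ^ l * (x + of_int j) - of_int k) * 2 ^ l) (at x)"
    by (rule DERIV_chain2[OF generator_has_real_derivative])
qed

lemma theta_has_real_derivative:
  assumes k: "0 \<le> k" "k < 2 ^ l" and x: "0 < x" "x < 1" "x \<notin> theta_kinks l k"
  shows "(theta l k e has_real_derivative theta_deriv l k e x) (at x)"
  using theta_window_has_real_derivative[OF x(3)]
  by (rule has_field_derivative_transform_within_open[where S="{0<..<1}"])
     (use x in \<open>auto simp: theta_eq_theta_window[OF k]\<close>)

lemma borel_measurable_theta_window [measurable]: "theta_window l k e \<in> borel_measurable borel"
  by (intro borel_measurable_continuous_onI continuous_on_theta_window)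

lemma borel_measurable_theta_deriv [measurable]: "theta_deriv l k e \<in> borel_measurable borel"
  unfolding theta_deriv_def[abs_def] by measurable

lemma abs_theta_window_le: "\<bar>theta_window l k e x\<bar> \<le> 9 * 2 powr (real l / 2)"
proof -
  have "\<bar>theta_window l k e x\<bar> \<le> (\<Sum>j\<in>{-1,0,1::int}. 2 powr (real l / 2) * 3)"
    unfolding theta_window_def
    by (intro order_trans[OF sum_abs] sum_mono) (auto simp: abs_mult intro!: abs_generator_le)
  then show ?thesis by simp
qed

lemma abs_theta_deriv_le: "\<bar>theta_deriv l k e x\<bar> \<le> 18 * 2 powr (real l / 2) * 2 ^ l"
proof -
  have "\<bar>theta_deriv l k e x\<bar> \<le> (\<Sum>j\<in>{-1,0,1::int}. 2 powr (real l / 2) * (6 * 2 ^ l))"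
    unfolding theta_deriv_def
    by (intro order_trans[OF sum_abs] sum_mono)
       (auto simp: abs_mult intro!: mult_left_mono mult_right_mono abs_generator_deriv_le)
  then show ?thesis by simp
qed

section \<open>Fourier coefficients of the one-dimensional factors\<close>

definition fourier_rate :: "int \<Rightarrow> complex" where
  "fourier_rate m = \<i> * complex_of_real (-2 * pi * of_int m)"

definition fourier_wave :: "int \<Rightarrow> real \<Rightarrow> complex" where
  "fourier_wave m t = exp (fourier_rate m * complex_of_real t)"

lemma norm_fourier_wave [simp]: "norm (fourier_wave m t) = 1"
  by (simp add: fourier_wave_def fourier_rate_def)

lemma fourier_rate_nonzero: "m \<noteq> 0 \<Longrightarrow> fourier_rate m \<noteq> 0"
  by (simp add: fourier_rate_def)

lemma norm_fourier_rate: "norm (fourier_rate m) = 2 * pi * \<bar>real_of_int m\<bar>"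
  by (simp add: fourier_rate_def norm_mult abs_mult)

lemma continuous_on_fourier_wave [continuous_intros]: "continuous_on S (fourier_wave m)"
  unfolding fourier_wave_def[abs_def] by (intro continuous_intros)

lemma borel_measurable_fourier_wave [measurable]: "fourier_wave m \<in> borel_measurable borel"
  by (intro borel_measurable_continuous_onI continuous_on_fourier_wave)

lemma fourier_wave_translate_int: "fourier_wave m (t + of_int j) = fourier_wave m t"
proof -
  have "fourier_wave m (t + of_int j) =
      fourier_wave m t * exp (complex_of_real (2 * real_of_int (- m * j) * pi) * \<i>)"
    unfolding fourier_wave_def fourier_rate_def exp_add[symmetric]
    by (rule arg_cong[where f=exp]) (simp add: algebra_simps)
  also have "exp (complex_of_real (2 * real_of_int (- m * j) * pi) * \<i>) = 1"
    by (rule exp_integer_2pi) simp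
  finally show ?thesis by simp
qed

lemma fourier_wave_has_vector_derivative:
  "(fourier_wave m has_vector_derivative fourier_rate m * fourier_wave m t) (at t within S)"
proof -
  have "((\<lambda>z. exp (fourier_rate m * z)) has_field_derivative
      exp (fourier_rate m * complex_of_real t) * fourier_rate m) (at (complex_of_real t))"
    by (auto intro!: derivative_eq_intros)
  from has_vector_derivative_real_field[OF this]
  show ?thesis unfolding fourier_wave_def[abs_def] by (simp add: mult.commute)
qed

lemma has_integral_hat_phi_affine:
  assumes a: "0 < a"
  shows "((\<lambda>y. hat_phi (a * y - b)) has_integral 1 / a) {(b - 1) / a .. (b + 1) / a}"
proof -
  have le: "(b - 1) / a \<le> b / a" "b / a \<le> (b + 1) / a" using a by (auto simp: field_simps)
  define G1 where "G1 y = (1 + a * y - b)\<^sup>2 / (2 * a)" for y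
  define G2 where "G2 y = - (1 - (a * y - b))\<^sup>2 / (2 * a)" for y
  have left: "((\<lambda>y. hat_phi (a * y - b)) has_integral (G1 (b / a) - G1 ((b - 1) / a)))
      {(b - 1) / a .. b / a}"
  proof (rule has_integral_eq[OF _ fundamental_theorem_of_calculus[OF le(1)]])
    fix y assume "y \<in> {(b - 1) / a .. b / a}"
    then have "-1 \<le> a * y - b" "a * y - b \<le> 0" using a by (auto simp: field_simps)
    then show "1 + a * y - b = hat_phi (a * y - b)" by (simp add: hat_phi_def)
  next
    fix y :: real
    show "(G1 has_vector_derivative 1 + a * y - b) (at y within {(b - 1) / a..b / a})"
      unfolding G1_def[abs_def] has_real_derivative_iff_has_vector_derivative[symmetric] using a
      by (auto intro!: derivative_eq_intros simp: field_simps power2_eq_square)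
  qed
  have right: "((\<lambda>y. hat_phi (a * y - b)) has_integral (G2 ((b + 1) / a) - G2 (b / a)))
      {b / a .. (b + 1) / a}"
  proof (rule has_integral_eq[OF _ fundamental_theorem_of_calculus[OF le(2)]])
    fix y assume "y \<in> {b / a .. (b + 1) / a}"
    then have "0 \<le> a * y - b" "a * y - b \<le> 1" using a by (auto simp: field_simps)
    then show "1 - (a * y - b) = hat_phi (a * y - b)" by (simp add: hat_phi_def)
  next
    fix y :: real
    show "(G2 has_vector_derivative 1 - (a * y - b)) (at y within {b / a..(b + 1) / a})"
      unfolding G2_def[abs_def] has_real_derivative_iff_has_vector_derivative[symmetric] using a
      by (auto intro!: derivative_eq_intros simp: field_simps power2_eq_square)
  qed
  from has_integral_combine[OF le left right] show ?thesis
    using a by (simp add: G1_def G2_def field_simps power2_eq_square)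
qed

lemma has_integral_affine_mult_exp:
  fixes u v c :: complex
  assumes c: "c \<noteq> 0" and pq: "p \<le> q"
  defines "F \<equiv> \<lambda>z. ((u + v * z) / c - v / c\<^sup>2) * exp (c * z)"
  shows "((\<lambda>y. (u + v * complex_of_real y) * exp (c * complex_of_real y)) has_integral
           F (of_real q) - F (of_real p)) {p..q}"
proof -
  have "(F has_field_derivative (u + v * z) * exp (c * z)) (at z)" for z
    unfolding F_def using c by (auto intro!: derivative_eq_intros simp: field_simps power2_eq_square)
  then show ?thesis
    by (rule fundamental_theorem_of_calculus[OF pq, OF has_vector_derivative_real_field])
qed

text \<open>Integrating twice by parts against the piecewise affine hat leaves only its three kinks;
  this is where the decay \<open>m\<^sup>-\<^sup>2\<close> of the Fourier coefficients comes from.\<close>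

lemma has_integral_hat_phi_wave:
  assumes a: "0 < a" and m: "m \<noteq> 0"
  shows "((\<lambda>y. complex_of_real (hat_phi (a * y - b)) * fourier_wave m y) has_integral
     (complex_of_real a / (fourier_rate m)\<^sup>2 *
        (fourier_wave m ((b - 1) / a) - 2 * fourier_wave m (b / a) + fourier_wave m ((b + 1) / a))))
     {(b - 1) / a .. (b + 1) / a}"
proof -
  define c where "c = fourier_rate m"
  have c: "c \<noteq> 0" using fourier_rate_nonzero[OF m] by (simp add: c_def)
  define A where "A = complex_of_real a"
  define B where "B = complex_of_real b"
  have le: "(b - 1) / a \<le> b / a" "b / a \<le> (b + 1) / a" using a by (auto simp: field_simps)
  have on_left: "(1 - B + A * complex_of_real y) * exp (c * complex_of_real y) =
      complex_of_real (hat_phi (a * y - b)) * fourier_wave m y" if "y \<in> {(b - 1) / a .. b / a}" for y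
  proof -
    have "-1 \<le> a * y - b" "a * y - b \<le> 0" using that a by (auto simp: field_simps)
    then show ?thesis by (simp add: hat_phi_def A_def B_def c_def fourier_wave_def)
  qed
  have on_right: "(1 + B + - A * complex_of_real y) * exp (c * complex_of_real y) =
      complex_of_real (hat_phi (a * y - b)) * fourier_wave m y" if "y \<in> {b / a .. (b + 1) / a}" for y
  proof -
    have "0 \<le> a * y - b" "a * y - b \<le> 1" using that a by (auto simp: field_simps)
    then show ?thesis by (simp add: hat_phi_def A_def B_def c_def fourier_wave_def)
  qed
  have kink: "A * complex_of_real ((b + t) / a) = B + of_real t" for t
  proof -
    have "a * ((b + t) / a) = b + t" using a by simp
    then show ?thesis unfolding A_def B_def of_real_mult[symmetric] by simp
  qed
  have kinks: "A * complex_of_real ((b - 1) / a) = B - 1" "A * complex_of_real (b / a) = B"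
    "A * complex_of_real ((b + 1) / a) = B + 1"
    using kink[of "-1"] kink[of 0] kink[of 1] by simp_all
  define F where "F u v z = ((u + v * z) / c - v / c\<^sup>2) * exp (c * z)" for u v z
  have "F (1 - B) A (of_real (b / a)) - F (1 - B) A (of_real ((b - 1) / a))
      + (F (1 + B) (- A) (of_real ((b + 1) / a)) - F (1 + B) (- A) (of_real (b / a)))
    = complex_of_real a / (fourier_rate m)\<^sup>2 *
        (fourier_wave m ((b - 1) / a) - 2 * fourier_wave m (b / a) + fourier_wave m ((b + 1) / a))"
    unfolding F_def kinks using a c
    by (simp add: A_def B_def c_def fourier_wave_def field_simps power2_eq_square)
  with has_integral_combine[OF le
      has_integral_eq[OF on_left has_integral_affine_mult_exp[OF c le(1), of "1 - B" A]]
      has_integral_eq[OF on_right has_integral_affine_mult_exp[OF c le(2), of "1 + B" "- A"]]]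
  show ?thesis
    unfolding F_def by simp
qed

lemma integrable_hat_phi_wave:
  "(\<lambda>y. complex_of_real (hat_phi (a * y - b)) * fourier_wave m y) integrable_on {c..d}"
  by (intro integrable_continuous_interval continuous_intros
      continuous_on_compose2[OF continuous_on_hat_phi[of UNIV]]) auto

definition hat_wave_integral :: "real \<Rightarrow> real \<Rightarrow> int \<Rightarrow> complex" where
  "hat_wave_integral a b m = integral {(b - 1) / a .. (b + 1) / a}
     (\<lambda>y. complex_of_real (hat_phi (a * y - b)) * fourier_wave m y)"

lemma norm_hat_wave_integral_le:
  assumes a: "0 < a"
  shows "norm (hat_wave_integral a b m) \<le> 1 / a"
proof -
  have hat: "((\<lambda>y. hat_phi (a * y - b)) has_integral 1 / a) {(b - 1) / a .. (b + 1) / a}"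
    by (rule has_integral_hat_phi_affine[OF a])
  then have "norm (integral {(b - 1) / a .. (b + 1) / a}
           (\<lambda>y. complex_of_real (hat_phi (a * y - b)) * fourier_wave m y))
      \<le> integral {(b - 1) / a .. (b + 1) / a} (\<lambda>y. hat_phi (a * y - b))"
    by (intro integral_norm_bound_integral integrable_hat_phi_wave)
       (auto simp: norm_mult hat_phi_nonneg)
  then show ?thesis
    using integral_unique[OF hat] by (simp add: hat_wave_integral_def)
qed

lemma norm_hat_wave_integral_le_freq:
  assumes a: "0 < a" and m: "m \<noteq> 0"
  shows "norm (hat_wave_integral a b m) \<le> a / (pi\<^sup>2 * (real_of_int m)\<^sup>2)"
proof -
  have kinks: "norm (fourier_wave m ((b - 1) / a) - 2 * fourier_wave m (b / a)
      + fourier_wave m ((b + 1) / a)) \<le> 4"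
  proof -
    have "norm (fourier_wave m ((b - 1) / a) - 2 * fourier_wave m (b / a)) \<le> 3"
      using norm_triangle_ineq4[of "fourier_wave m ((b - 1) / a)" "2 * fourier_wave m (b / a)"]
      by (simp add: norm_mult)
    then show ?thesis
      using norm_triangle_ineq[of "fourier_wave m ((b - 1) / a) - 2 * fourier_wave m (b / a)"
          "fourier_wave m ((b + 1) / a)"] by simp
  qed
  have rate: "(norm (fourier_rate m))\<^sup>2 = 4 * pi\<^sup>2 * (real_of_int m)\<^sup>2"
    by (simp add: norm_fourier_rate power_mult_distrib)
  have "norm (hat_wave_integral a b m) =
      a / (norm (fourier_rate m))\<^sup>2 *
      norm (fourier_wave m ((b - 1) / a) - 2 * fourier_wave m (b / a) + fourier_wave m ((b + 1) / a))"
    using a by (simp add: hat_wave_integral_def integral_unique[OF has_integral_hat_phi_wave[OF a m]]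
        norm_mult norm_divide norm_power)
  also have "\<dots> \<le> a / (norm (fourier_rate m))\<^sup>2 * 4"
    using a kinks by (intro mult_left_mono) auto
  finally show ?thesis
    unfolding rate by simp
qed

lemma has_integral_fold_translates:
  fixes f :: "real \<Rightarrow> 'a::banach"
  assumes f: "f integrable_on {-1..2}"
  shows "((\<lambda>x. \<Sum>j\<in>{-1,0,1::int}. f (x + of_int j)) has_integral integral {-1..2} f) {0..1}"
proof -
  have sub: "f integrable_on {c..d}" if "-1 \<le> c" "d \<le> 2" for c d
    by (rule integrable_subinterval_real[OF f]) (use that in auto)
  have "integral {-1..0} f + integral {0..1} f + integral {1..2} f = integral {-1..2} f"
    using Henstock_Kurzweil_Integration.integral_combine[of "-1" 0 2 f]
      Henstock_Kurzweil_Integration.integral_combine[of 0 1 2 f] f sub[of 0 2]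
    by (simp add: add.assoc)
  moreover have "((\<lambda>x. f (x + of_int j)) has_integral integral {of_int j .. of_int j + 1} f) {0..1}"
    if "j \<in> {-1,0,1}" for j :: int
    using has_integral_affinity_iff[of 1 f "of_int j" _ "of_int j" "of_int j + 1"] that
    by (auto simp: add.commute intro!: integrable_integral sub)
  then have "((\<lambda>x. \<Sum>j\<in>{-1,0,1::int}. f (x + of_int j)) has_integral
      (\<Sum>j\<in>{-1,0,1::int}. integral {of_int j .. of_int j + 1} f)) {0..1}"
    by (intro has_integral_sum) auto
  ultimately show ?thesis by (simp add: add.assoc)
qed

definition theta_coeff :: "nat \<Rightarrow> int \<Rightarrow> nat \<Rightarrow> int \<Rightarrow> complex" where
  "theta_coeff l k e m = integral {0..1} (\<lambda>x. complex_of_real (theta l k e x) * fourier_wave m x)"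

lemma has_integral_hat_wave_on_window:
  assumes a: "0 < a" and supp: "-1 \<le> (b - 1) / a" "(b + 1) / a \<le> 2"
  shows "((\<lambda>y. complex_of_real (hat_phi (a * y - b)) * fourier_wave m y) has_integral
           hat_wave_integral a b m) {-1..2}"
  unfolding hat_wave_integral_def
proof (rule has_integral_on_superset[OF integrable_integral[OF integrable_hat_phi_wave]])
  fix y assume "y \<notin> {(b - 1) / a .. (b + 1) / a}"
  then have "\<not> (-1 < a * y - b \<and> a * y - b < 1)" using a by (auto simp: field_simps)
  then show "complex_of_real (hat_phi (a * y - b)) * fourier_wave m y = 0"
    by (simp add: hat_phi_eq_0)
qed (use supp in auto)

lemma theta_wave_eq_sum:
  assumes k: "0 \<le> k" "k < 2 ^ l" and x: "0 \<le> x" "x \<le> 1"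
  shows "complex_of_real (theta l k e x) * fourier_wave m x =
    (\<Sum>r\<in>refine_shifts e. complex_of_real (2 powr (real l / 2) * refine_weight e r) *
       (\<Sum>j\<in>{-1,0,1::int}.
          complex_of_real (hat_phi (refine_scale e * 2 ^ l * (x + of_int j)
                                   - (refine_scale e * of_int k + of_int r)))
          * fourier_wave m (x + of_int j)))"
proof -
  have arg: "refine_scale e * (2 ^ l * (x + of_int j) - of_int k) - of_int r =
      refine_scale e * 2 ^ l * (x + of_int j) - (refine_scale e * of_int k + of_int r)" for j r :: int
    by (simp add: algebra_simps)
  have "complex_of_real (theta l k e x) * fourier_wave m x =
     (\<Sum>j\<in>{-1,0,1::int}. \<Sum>r\<in>refine_shifts e.
        complex_of_real (2 powr (real l / 2) * refine_weight e r) *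
        (complex_of_real (hat_phi (refine_scale e * 2 ^ l * (x + of_int j)
                                   - (refine_scale e * of_int k + of_int r)))
         * fourier_wave m (x + of_int j)))"
    unfolding theta_eq_theta_window[OF k x] theta_window_def generator_def arg of_real_sum
      of_real_mult sum_distrib_left sum_distrib_right fourier_wave_translate_int
    by (intro sum.cong refl) (simp add: mult_ac)
  also have "\<dots> = (\<Sum>r\<in>refine_shifts e. \<Sum>j\<in>{-1,0,1::int}.
        complex_of_real (2 powr (real l / 2) * refine_weight e r) *
        (complex_of_real (hat_phi (refine_scale e * 2 ^ l * (x + of_int j)
                                   - (refine_scale e * of_int k + of_int r)))
         * fourier_wave m (x + of_int j)))"
    by (rule sum.swap)
  finally show ?thesis
    by (simp only: sum_distrib_left)
qed

lemma has_integral_theta_wave_hat_sum: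
  assumes k: "0 \<le> k" "k < 2 ^ l"
  shows "((\<lambda>x. complex_of_real (theta l k e x) * fourier_wave m x) has_integral
      (\<Sum>r\<in>refine_shifts e. complex_of_real (2 powr (real l / 2) * refine_weight e r) *
         hat_wave_integral (refine_scale e * 2 ^ l) (refine_scale e * of_int k + of_int r) m)) {0..1}"
proof -
  define a where "a = refine_scale e * 2 ^ l"
  have a: "0 < a" using refine_scale_pos[of e] by (simp add: a_def)
  have window: "((\<lambda>x. \<Sum>j\<in>{-1,0,1::int}.
        complex_of_real (hat_phi (a * (x + of_int j) - (refine_scale e * of_int k + of_int r)))
        * fourier_wave m (x + of_int j))
      has_integral hat_wave_integral a (refine_scale e * of_int k + of_int r) m) {0..1}"
    if r: "r \<in> refine_shifts e" for r
  proof -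
    note k' = real_of_int_dyadic_index_bounds[OF k]
    have p: "(1::real) \<le> 2 ^ l" by simp
    have "- a \<le> refine_scale e * of_int k + of_int r - 1 \<and>
        refine_scale e * of_int k + of_int r + 1 \<le> 2 * a"
      using refine_shifts_bounds[OF r] r k' p
      by (cases "e = 0") (auto simp: a_def refine_scale_def refine_shifts_def)
    then have "-1 \<le> (refine_scale e * of_int k + of_int r - 1) / a"
        "(refine_scale e * of_int k + of_int r + 1) / a \<le> 2"
      using a by (auto simp: field_simps)
    from has_integral_hat_wave_on_window[OF a this, of m]
    have "integral {-1..2} (\<lambda>y. complex_of_real (hat_phi (a * y - (refine_scale e * of_int k + of_int r)))
          * fourier_wave m y) = hat_wave_integral a (refine_scale e * of_int k + of_int r) m"
      and "(\<lambda>y. complex_of_real (hat_phi (a * y - (refine_scale e * of_int k + of_int r)))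
          * fourier_wave m y) integrable_on {-1..2}"
      by (auto simp: integral_unique)
    from has_integral_fold_translates[OF this(2)] this(1) show ?thesis by simp
  qed
  have sum: "((\<lambda>x. \<Sum>r\<in>refine_shifts e. complex_of_real (2 powr (real l / 2) * refine_weight e r) *
        (\<Sum>j\<in>{-1,0,1::int}.
          complex_of_real (hat_phi (a * (x + of_int j) - (refine_scale e * of_int k + of_int r)))
          * fourier_wave m (x + of_int j)))
      has_integral (\<Sum>r\<in>refine_shifts e. complex_of_real (2 powr (real l / 2) * refine_weight e r) *
         hat_wave_integral a (refine_scale e * of_int k + of_int r) m)) {0..1}"
    by (intro has_integral_sum finite_refine_shifts has_integral_mult_right window)
  show ?thesis
    unfolding a_def[symmetric]
    by (rule has_integral_eq[OF _ sum]) (simp add: theta_wave_eq_sum[OF k] a_def)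
qed

lemma
  assumes k: "0 \<le> k" "k < 2 ^ l"
  shows has_integral_theta_coeff:
      "((\<lambda>x. complex_of_real (theta l k e x) * fourier_wave m x) has_integral theta_coeff l k e m)
         {0..1}"
    and theta_coeff_eq:
      "theta_coeff l k e m =
         (\<Sum>r\<in>refine_shifts e. complex_of_real (2 powr (real l / 2) * refine_weight e r) *
            hat_wave_integral (refine_scale e * 2 ^ l) (refine_scale e * of_int k + of_int r) m)"
  using has_integral_theta_wave_hat_sum[OF k] by (auto simp: theta_coeff_def integral_unique)

lemma norm_theta_coeff_le_sum:
  assumes k: "0 \<le> k" "k < 2 ^ l"
    and B: "\<And>r. r \<in> refine_shifts e \<Longrightarrow>
      norm (hat_wave_integral (refine_scale e * 2 ^ l) (refine_scale e * of_int k + of_int r) m) \<le> B"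
  shows "norm (theta_coeff l k e m) \<le> 2 powr (real l / 2) * (if e = 0 then 1 else 3) * B"
proof -
  have "norm (theta_coeff l k e m) \<le> (\<Sum>r\<in>refine_shifts e. 2 powr (real l / 2) * \<bar>refine_weight e r\<bar> * B)"
    unfolding theta_coeff_eq[OF k]
    by (intro order_trans[OF norm_sum] sum_mono) (auto simp: norm_mult abs_mult intro!: mult_left_mono B)
  then show ?thesis
    by (simp add: sum_distrib_left[symmetric] sum_distrib_right[symmetric] sum_abs_refine_weight mult_ac)
qed

lemma norm_theta_coeff_le:
  assumes k: "0 \<le> k" "k < 2 ^ l"
  shows "norm (theta_coeff l k e m) \<le> 2 * 2 powr (real l / 2) / 2 ^ l"
proof -
  have "norm (theta_coeff l k e m) \<le>
      2 powr (real l / 2) * (if e = 0 then 1 else 3) * (1 / (refine_scale e * 2 ^ l))"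
    using refine_scale_pos[of e]
    by (intro norm_theta_coeff_le_sum[OF k] norm_hat_wave_integral_le) auto
  also have "\<dots> \<le> 2 * 2 powr (real l / 2) / 2 ^ l"
    by (cases "e = 0") (auto simp: refine_scale_def field_simps)
  finally show ?thesis .
qed

lemma norm_theta_coeff_le_freq:
  assumes k: "0 \<le> k" "k < 2 ^ l" and m: "m \<noteq> 0"
  shows "norm (theta_coeff l k e m) \<le> 2 * 2 powr (real l / 2) * 2 ^ l / (real_of_int m)\<^sup>2"
proof -
  have "norm (theta_coeff l k e m) \<le> 2 powr (real l / 2) * (if e = 0 then 1 else 3) *
      (refine_scale e * 2 ^ l / (pi\<^sup>2 * (real_of_int m)\<^sup>2))"
    using refine_scale_pos[of e]
    by (intro norm_theta_coeff_le_sum[OF k] norm_hat_wave_integral_le_freq m) auto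
  also have "\<dots> \<le> 2 * 2 powr (real l / 2) * 2 ^ l / (real_of_int m)\<^sup>2"
  proof -
    have "3 * 3 \<le> pi * pi" using pi_gt3 by (intro mult_mono) auto
    then have "(if e = 0 then 1 else 3) * refine_scale e \<le> 2 * pi\<^sup>2"
      by (auto simp: refine_scale_def power2_eq_square)
    then have "(if e = 0 then 1 else 3) * refine_scale e / pi\<^sup>2 \<le> 2"
      by (simp add: divide_le_eq)
    from mult_left_mono[OF this, of "2 powr (real l / 2) * 2 ^ l / (real_of_int m)\<^sup>2"]
    show ?thesis using m by (simp add: field_simps)
  qed
  finally show ?thesis .
qed

text \<open>Integration by parts; the boundary terms cancel because \<open>\<theta>\<close> is \<open>1\<close>-periodic.\<close>

lemma has_integral_theta_deriv_wave:
  assumes k: "0 \<le> k" "k < 2 ^ l"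
  shows "((\<lambda>x. complex_of_real (theta_deriv l k e x) * fourier_wave m x) has_integral
           - fourier_rate m * theta_coeff l k e m) {0..1}"
proof -
  let ?f = "\<lambda>x. complex_of_real (theta l k e x) * fourier_wave m x"
  let ?f' = "\<lambda>x. complex_of_real (theta l k e x) * (fourier_rate m * fourier_wave m x)
                 + complex_of_real (theta_deriv l k e x) * fourier_wave m x"
  have "(?f' has_integral (?f 1 - ?f 0)) {0..1}"
  proof (rule fundamental_theorem_of_calculus_interior_strong[OF finite_theta_kinks[of l k]])
    fix x assume x: "x \<in> {0<..<1} - theta_kinks l k"
    have "((\<lambda>x. complex_of_real (theta l k e x)) has_vector_derivative
        complex_of_real (theta_deriv l k e x)) (at x)"
      using x by (intro has_vector_derivative_of_real theta_has_real_derivative[OF k]) auto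
    from has_vector_derivative_mult[OF this fourier_wave_has_vector_derivative]
    show "(?f has_vector_derivative ?f' x) (at x)" by simp
  qed (auto intro!: continuous_intros continuous_on_theta[OF k])
  moreover have "?f 1 - ?f 0 = 0"
    using theta_1_eq_theta_0[OF k, of e] fourier_wave_translate_int[of m 0 1] by simp
  ultimately have "((\<lambda>x. ?f' x - fourier_rate m * ?f x) has_integral
      0 - fourier_rate m * theta_coeff l k e m) {0..1}"
    by (intro has_integral_diff has_integral_mult_right has_integral_theta_coeff[OF k]) simp
  then show ?thesis by (simp add: algebra_simps)
qed

section \<open>Factorization of the bilinear form\<close>

lemma has_integral_01_imp_lborel:
  fixes f :: "real \<Rightarrow> 'b::euclidean_space"
  assumes f: "(f has_integral I) {0..1}"
    and meas: "(\<lambda>x. indicator {0<..<1} x *\<^sub>R f x) \<in> borel_measurable borel"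
    and bound: "\<And>x. x \<in> {0<..<1} \<Longrightarrow> norm (f x) \<le> B"
  shows "integrable lborel (\<lambda>x. indicator {0<..<1} x *\<^sub>R f x)"
    and "integral\<^sup>L lborel (\<lambda>x. indicator {0<..<1} x *\<^sub>R f x) = I"
proof -
  show int: "integrable lborel (\<lambda>x. indicator {0<..<1} x *\<^sub>R f x)"
  proof (rule Bochner_Integration.integrable_bound)
    show "integrable lborel (\<lambda>x. indicator {0<..<1::real} x * \<bar>B\<bar>)"
      by (intro integrable_mult_left integrable_real_indicator) auto
    show "AE x in lborel. norm (indicator {0<..<1} x *\<^sub>R f x) \<le> norm (indicator {0<..<1::real} x * \<bar>B\<bar>)"
      using bound by (intro AE_I2) (force simp: indicator_def)
  qed (use meas in simp)
  have "(f has_integral I) {0<..<1}"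
    using f has_integral_open_interval[of f I 0 "1::real"] by simp
  then have "((\<lambda>x. indicator {0<..<1} x *\<^sub>R f x) has_integral I) UNIV"
    unfolding indicator_scaleR_eq_if has_integral_restrict_UNIV .
  then show "integral\<^sup>L lborel (\<lambda>x. indicator {0<..<1} x *\<^sub>R f x) = I"
    using has_integral_unique[OF has_integral_integral_lborel[OF int]] by simp
qed

definition theta_wave_01 :: "nat \<Rightarrow> int \<Rightarrow> nat \<Rightarrow> int \<Rightarrow> real \<Rightarrow> complex" where
  "theta_wave_01 l k e m t =
     indicator {0<..<1} t *\<^sub>R (complex_of_real (theta l k e t) * fourier_wave m t)"

definition theta_deriv_wave_01 :: "nat \<Rightarrow> int \<Rightarrow> nat \<Rightarrow> int \<Rightarrow> real \<Rightarrow> complex" where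
  "theta_deriv_wave_01 l k e m t =
     indicator {0<..<1} t *\<^sub>R (complex_of_real (theta_deriv l k e t) * fourier_wave m t)"

lemma borel_measurable_theta_wave_01:
  assumes k: "0 \<le> k" "k < 2 ^ l"
  shows "theta_wave_01 l k e m \<in> borel_measurable borel"
proof -
  have "theta_wave_01 l k e m =
      (\<lambda>t. indicator {0<..<1} t *\<^sub>R (complex_of_real (theta_window l k e t) * fourier_wave m t))"
    by (rule ext) (auto simp: theta_wave_01_def indicator_def theta_eq_theta_window[OF k])
  then show ?thesis by simp
qed

lemma borel_measurable_theta_deriv_wave_01 [measurable]:
  "theta_deriv_wave_01 l k e m \<in> borel_measurable borel"
  unfolding theta_deriv_wave_01_def[abs_def] by measurable

lemma
  assumes k: "0 \<le> k" "k < 2 ^ l"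
  shows integrable_theta_wave_01: "integrable lborel (theta_wave_01 l k e m)"
    and integral_theta_wave_01: "integral\<^sup>L lborel (theta_wave_01 l k e m) = theta_coeff l k e m"
proof -
  have "norm (complex_of_real (theta l k e x) * fourier_wave m x) \<le> 9 * 2 powr (real l / 2)"
    if "x \<in> {0<..<1}" for x
    using that abs_theta_window_le[of l k e x] by (simp add: norm_mult theta_eq_theta_window[OF k])
  from has_integral_01_imp_lborel[OF has_integral_theta_coeff[OF k] _ this]
  show "integrable lborel (theta_wave_01 l k e m)"
    and "integral\<^sup>L lborel (theta_wave_01 l k e m) = theta_coeff l k e m"
    using borel_measurable_theta_wave_01[OF k] unfolding theta_wave_01_def[abs_def] by auto
qed

lemma
  assumes k: "0 \<le> k" "k < 2 ^ l"
  shows integrable_theta_deriv_wave_01: "integrable lborel (theta_deriv_wave_01 l k e m)"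
    and integral_theta_deriv_wave_01:
      "integral\<^sup>L lborel (theta_deriv_wave_01 l k e m) = - fourier_rate m * theta_coeff l k e m"
proof -
  have "norm (complex_of_real (theta_deriv l k e x) * fourier_wave m x) \<le> 18 * 2 powr (real l / 2) * 2 ^ l"
    for x
    using abs_theta_deriv_le[of l k e x] by (simp add: norm_mult)
  from has_integral_01_imp_lborel[OF has_integral_theta_deriv_wave[OF k] _ this]
  show "integrable lborel (theta_deriv_wave_01 l k e m)"
    and "integral\<^sup>L lborel (theta_deriv_wave_01 l k e m) = - fourier_rate m * theta_coeff l k e m"
    unfolding theta_deriv_wave_01_def[abs_def] by auto
qed

definition xi_norm :: "nat \<Rightarrow> (nat \<Rightarrow> int) \<Rightarrow> real" where
  "xi_norm n q = (1 + (2 * pi) ^ 2 * qnorm2_sq n q) powr (-1/2)"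

lemma pderiv_i_psi_iso_hat:
  assumes i: "i < n" and k: "0 \<le> k i" "k i < 2 ^ l"
    and x: "0 < x i" "x i < 1" "x i \<notin> theta_kinks l (k i)"
  shows "pderiv_i i (psi_iso_hat n l k e) x = complex_of_real (2 powr - real l *
           (theta_deriv l (k i) (e i) (x i) * (\<Prod>j\<in>{..<n} - {i}. theta l (k j) (e j) (x j))))"
proof -
  define P where "P = (\<Prod>j\<in>{..<n} - {i}. theta l (k j) (e j) (x j))"
  have "(\<Prod>j<n. theta l (k j) (e j) ((x(i := t)) j)) = theta l (k i) (e i) t * P" for t
    using i unfolding P_def by (subst prod.remove[of _ i]) (auto intro!: prod.cong)
  then have "(\<lambda>t. psi_iso_hat n l k e (x(i := t))) =
      (\<lambda>t. complex_of_real (2 powr - real l * (theta l (k i) (e i) t * P)))"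
    by (simp add: psi_iso_hat_def psi_iso_def)
  moreover have "((\<lambda>t. 2 powr - real l * (theta l (k i) (e i) t * P)) has_real_derivative
      2 powr - real l * (theta_deriv l (k i) (e i) (x i) * P)) (at (x i))"
    by (intro DERIV_cmult DERIV_cmult_right theta_has_real_derivative k x)
  ultimately show ?thesis
    unfolding pderiv_i_def P_def[symmetric]
    by (metis vector_derivative_at has_vector_derivative_of_real)
qed

lemma pderiv_i_xi_hat:
  assumes i: "i < n"
  shows "pderiv_i i (xi_hat n q) x = (2 * pi * \<i> * of_int (q i)) * xi_hat n q x"
proof -
  define R where "R = (\<Sum>j\<in>{..<n} - {i}. real_of_int (q j) * x j)"
  define F where "F z = complex_of_real (xi_norm n q) *
      exp (2 * pi * \<i> * (of_int (q i) * z + complex_of_real R))" for z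
  have phase: "(\<Sum>j<n. real_of_int (q j) * (x(i := t)) j) = real_of_int (q i) * t + R" for t
    using i unfolding R_def by (subst sum.remove[of _ i]) (auto intro!: sum.cong)
  have restrict: "(\<lambda>t. xi_hat n q (x(i := t))) = (\<lambda>t. F (complex_of_real t))"
    unfolding xi_hat_def xi_def phase F_def xi_norm_def by (rule ext) simp
  have at_x: "F (complex_of_real (x i)) = xi_hat n q x"
    using phase[of "x i"] unfolding xi_hat_def xi_def F_def xi_norm_def by simp
  have "(F has_field_derivative F (complex_of_real (x i)) * (2 * pi * \<i> * of_int (q i)))
      (at (complex_of_real (x i)))"
    unfolding F_def[abs_def] by (auto intro!: derivative_eq_intros simp: algebra_simps)
  from vector_derivative_at[OF has_vector_derivative_real_field[OF this]]
  show ?thesis unfolding pderiv_i_def restrict at_x by (simp add: mult.commute)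
qed

lemma cnj_xi_hat:
  "cnj (xi_hat n q x) = complex_of_real (xi_norm n q) * (\<Prod>j<n. fourier_wave (q j) (x j))"
proof -
  have "cnj (2 * pi * \<i> * complex_of_real (\<Sum>i<n. real_of_int (q i) * x i)) =
      (\<Sum>j<n. fourier_rate (q j) * complex_of_real (x j))"
    by (simp add: fourier_rate_def sum_distrib_left of_real_sum algebra_simps flip: sum_negf)
  then show ?thesis
    by (simp add: xi_hat_def xi_def xi_norm_def exp_cnj fourier_wave_def exp_sum flip: exp_of_real)
qed

definition bil_integrand :: "nat \<Rightarrow> real \<Rightarrow> (nat \<Rightarrow> real) \<Rightarrow> real \<Rightarrow>
    ((nat \<Rightarrow> real) \<Rightarrow> complex) \<Rightarrow> ((nat \<Rightarrow> real) \<Rightarrow> complex) \<Rightarrow> (nat \<Rightarrow> real) \<Rightarrow> complex" where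
  "bil_integrand n \<eta> \<beta> \<rho> u v x =
      complex_of_real \<eta> * (\<Sum>i<n. pderiv_i i u x * cnj (pderiv_i i v x))
    + (\<Sum>i<n. complex_of_real (\<beta> i) * pderiv_i i u x) * cnj (v x)
    + complex_of_real \<rho> * u x * cnj (v x)"

lemma bil_eq_integral_bil_integrand:
  "bil n \<eta> \<beta> \<rho> u v = integral\<^sup>L (leb_n n) (\<lambda>x. indicator (dom_D n) x *\<^sub>R bil_integrand n \<eta> \<beta> \<rho> u v x)"
  by (simp add: bil_def bil_integrand_def set_lebesgue_integral_def)

text \<open>Off the coordinate kinks, the integrand of \<open>a(\<psi>\<^sub>j, \<xi>\<^sub>q)\<close> is a combination of tensor
  products of the one-dimensional factors \<open>\<theta>(x\<^sub>j) exp(-2\<pi>i q\<^sub>j x\<^sub>j)\<close>, one of them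
  differentiated in each gradient term.\<close>

definition grad_coeff :: "nat \<Rightarrow> nat \<Rightarrow> (nat \<Rightarrow> int) \<Rightarrow> real \<Rightarrow> (nat \<Rightarrow> real) \<Rightarrow> nat \<Rightarrow> complex" where
  "grad_coeff n l q \<eta> \<beta> i = complex_of_real (2 powr - real l * xi_norm n q) *
     (complex_of_real \<eta> * cnj (2 * pi * \<i> * of_int (q i)) + complex_of_real (\<beta> i))"

definition tensor_integrand :: "nat \<Rightarrow> nat \<Rightarrow> (nat \<Rightarrow> int) \<Rightarrow> (nat \<Rightarrow> nat) \<Rightarrow> (nat \<Rightarrow> int) \<Rightarrow>
    real \<Rightarrow> (nat \<Rightarrow> real) \<Rightarrow> real \<Rightarrow> (nat \<Rightarrow> real) \<Rightarrow> complex" where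
  "tensor_integrand n l k e q \<eta> \<beta> \<rho> x =
     (\<Sum>i<n. grad_coeff n l q \<eta> \<beta> i *
        (\<Prod>j<n. (if j = i then theta_deriv_wave_01 else theta_wave_01) l (k j) (e j) (q j) (x j)))
   + complex_of_real (2 powr - real l * xi_norm n q * \<rho>) *
        (\<Prod>j<n. theta_wave_01 l (k j) (e j) (q j) (x j))"

lemma psi_iso_hat_mult_cnj_xi_hat:
  "psi_iso_hat n l k e x * cnj (xi_hat n q x) = complex_of_real (2 powr - real l * xi_norm n q) *
     (\<Prod>j<n. complex_of_real (theta l (k j) (e j) (x j)) * fourier_wave (q j) (x j))"
  by (simp add: psi_iso_hat_def psi_iso_def cnj_xi_hat of_real_prod prod.distrib mult_ac)

lemma pderiv_i_psi_iso_hat_mult_cnj_xi_hat: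
  assumes i: "i < n" and k: "0 \<le> k i" "k i < 2 ^ l"
    and x: "0 < x i" "x i < 1" "x i \<notin> theta_kinks l (k i)"
  shows "pderiv_i i (psi_iso_hat n l k e) x * cnj (xi_hat n q x) =
    complex_of_real (2 powr - real l * xi_norm n q) *
    (\<Prod>j<n. complex_of_real ((if j = i then theta_deriv else theta) l (k j) (e j) (x j))
             * fourier_wave (q j) (x j))"
proof -
  have "(\<Prod>j<n. complex_of_real ((if j = i then theta_deriv else theta) l (k j) (e j) (x j))
             * fourier_wave (q j) (x j)) =
      complex_of_real (theta_deriv l (k i) (e i) (x i)) * fourier_wave (q i) (x i) *
      (complex_of_real (\<Prod>j\<in>{..<n} - {i}. theta l (k j) (e j) (x j)) *
       (\<Prod>j\<in>{..<n} - {i}. fourier_wave (q j) (x j)))"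
    using i by (subst prod.remove[of _ i]) (auto simp: of_real_prod prod.distrib intro!: prod.cong)
  moreover have "(\<Prod>j<n. fourier_wave (q j) (x j)) =
      fourier_wave (q i) (x i) * (\<Prod>j\<in>{..<n} - {i}. fourier_wave (q j) (x j))"
    using i by (subst prod.remove[of _ i]) auto
  ultimately show ?thesis
    by (simp add: pderiv_i_psi_iso_hat[where k=k and x=x and e=e, OF i k x] cnj_xi_hat mult_ac)
qed

lemma tensor_integrand_eq_0:
  assumes "j0 < n" "\<not> (0 < x j0 \<and> x j0 < 1)"
  shows "tensor_integrand n l k e q \<eta> \<beta> \<rho> x = 0"
proof -
  have "theta_wave_01 l (k j0) (e j0) (q j0) (x j0) = 0"
    "theta_deriv_wave_01 l (k j0) (e j0) (q j0) (x j0) = 0"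
    using assms(2) by (auto simp: theta_wave_01_def theta_deriv_wave_01_def)
  then have "(\<Prod>j<n. theta_wave_01 l (k j) (e j) (q j) (x j)) = 0"
    and zero: "(\<Prod>j<n. (if j = i then theta_deriv_wave_01 else theta_wave_01) l (k j) (e j) (q j) (x j)) = 0"
    for i
    using assms(1) by (intro prod_zero; force)+
  then show ?thesis
    unfolding tensor_integrand_def by (simp only: zero) simp
qed

lemma indicator_bil_integrand_eq_tensor_integrand:
  assumes k: "\<And>i. i < n \<Longrightarrow> 0 \<le> k i \<and> k i < 2 ^ l"
    and off_kinks: "\<And>i. i < n \<Longrightarrow> x i \<notin> theta_kinks l (k i)"
    and x: "x \<in> extensional {..<n}"
  shows "indicator (dom_D n) x *\<^sub>R bil_integrand n \<eta> \<beta> \<rho> (psi_iso_hat n l k e) (xi_hat n q) x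
    = tensor_integrand n l k e q \<eta> \<beta> \<rho> x"
proof (cases "\<forall>j<n. 0 < x j \<and> x j < 1")
  case False
  then obtain j0 where j0: "j0 < n" "\<not> (0 < x j0 \<and> x j0 < 1)" by auto
  then have "x \<notin> dom_D n" by (auto simp: dom_D_def PiE_def Pi_def)
  with tensor_integrand_eq_0[where x=x, OF j0] show ?thesis by simp
next
  case True
  have "x \<in> dom_D n" using True x by (auto simp: dom_D_def PiE_def Pi_def)
  have tensor: "(\<Prod>j<n. (if j = i then theta_deriv_wave_01 else theta_wave_01) l (k j) (e j) (q j) (x j))
      = (\<Prod>j<n. complex_of_real ((if j = i then theta_deriv else theta) l (k j) (e j) (x j))
             * fourier_wave (q j) (x j))" for i
    using True by (intro prod.cong) (auto simp: theta_wave_01_def theta_deriv_wave_01_def)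
  have tensor0: "(\<Prod>j<n. theta_wave_01 l (k j) (e j) (q j) (x j))
      = (\<Prod>j<n. complex_of_real (theta l (k j) (e j) (x j)) * fourier_wave (q j) (x j))"
    using True by (intro prod.cong) (auto simp: theta_wave_01_def)
  have grad: "pderiv_i i (psi_iso_hat n l k e) x * cnj (xi_hat n q x) =
    complex_of_real (2 powr - real l * xi_norm n q) *
    (\<Prod>j<n. complex_of_real ((if j = i then theta_deriv else theta) l (k j) (e j) (x j))
             * fourier_wave (q j) (x j))" if "i < n" for i
    using that True k[OF that] off_kinks[OF that] by (intro pderiv_i_psi_iso_hat_mult_cnj_xi_hat) auto
  have chain_rule: "(\<Sum>i<n. pderiv_i i (psi_iso_hat n l k e) x * cnj (pderiv_i i (xi_hat n q) x)) =
      (\<Sum>i<n. cnj (2 * pi * \<i> * of_int (q i)) * (pderiv_i i (psi_iso_hat n l k e) x * cnj (xi_hat n q x)))"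
    by (intro sum.cong) (simp_all add: pderiv_i_xi_hat mult_ac)
  have "bil_integrand n \<eta> \<beta> \<rho> (psi_iso_hat n l k e) (xi_hat n q) x =
      (\<Sum>i<n. (complex_of_real \<eta> * cnj (2 * pi * \<i> * of_int (q i)) + complex_of_real (\<beta> i)) *
         (pderiv_i i (psi_iso_hat n l k e) x * cnj (xi_hat n q x)))
      + complex_of_real \<rho> * (psi_iso_hat n l k e x * cnj (xi_hat n q x))"
    unfolding bil_integrand_def chain_rule
    by (simp add: sum_distrib_left sum_distrib_right algebra_simps sum.distrib sum_subtractf sum_negf)
  also have "\<dots> = tensor_integrand n l k e q \<eta> \<beta> \<rho> x"
    unfolding tensor_integrand_def psi_iso_hat_mult_cnj_xi_hat tensor tensor0
    by (intro arg_cong2[where f="(+)"] sum.cong refl) (auto simp: grad grad_coeff_def)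
  finally show ?thesis using \<open>x \<in> dom_D n\<close> by simp
qed

lemma borel_measurable_completion_AE_eq:
  fixes f g :: "'a \<Rightarrow> 'b::topological_space"
  assumes g: "g \<in> borel_measurable M" and N: "N \<in> null_sets M"
    and eq: "\<And>x. x \<in> space M \<Longrightarrow> x \<notin> N \<Longrightarrow> f x = g x"
  shows "f \<in> borel_measurable (completion M)"
proof (rule measurableI)
  fix A :: "'b set" assume A: "A \<in> sets borel"
  have split: "f -` A \<inter> space (completion M) = (g -` A \<inter> space M - N) \<union> (f -` A \<inter> space M \<inter> N)"
    using eq by auto
  have "g -` A \<inter> space M - N \<in> sets M"
    using measurable_sets[OF g A] N by auto
  then show "f -` A \<inter> space (completion M) \<in> sets (completion M)"
    unfolding split by (intro sets_completionI[OF refl _ N]) auto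
qed simp

lemma null_sets_PiM_lborel_coordinate:
  assumes "finite I" "i \<in> I" "finite Z"
  shows "{x \<in> space (\<Pi>\<^sub>M j\<in>I. lborel). x i \<in> Z} \<in> null_sets (\<Pi>\<^sub>M j\<in>I. (lborel :: real measure))"
proof -
  interpret product_sigma_finite "\<lambda>_. lborel :: real measure"
    by (simp add: product_sigma_finite_def sigma_finite_lborel)
  have Z: "Z \<in> sets lborel" using assms(3) by (simp add: finite_imp_closed)
  have "{x \<in> space (\<Pi>\<^sub>M j\<in>I. lborel). x i \<in> Z} = (\<Pi>\<^sub>E j\<in>I. if j = i then Z else UNIV)"
    using assms(2) by (auto simp: space_PiM PiE_def Pi_def split: if_splits)
  moreover have "emeasure (\<Pi>\<^sub>M j\<in>I. lborel) (\<Pi>\<^sub>E j\<in>I. if j = i then Z else UNIV) =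
      (\<Prod>j\<in>I. emeasure lborel (if j = i then Z else UNIV))"
    using assms(1) Z by (intro emeasure_PiM) auto
  moreover have "(\<Prod>j\<in>I. emeasure lborel (if j = i then Z else UNIV)) = 0"
    using assms by (intro prod_zero) (auto intro!: bexI[of _ i] emeasure_lborel_countable countable_finite)
  moreover have "(\<Pi>\<^sub>E j\<in>I. if j = i then Z else UNIV) \<in> sets (\<Pi>\<^sub>M j\<in>I. lborel)"
    using assms(1) Z by (intro sets_PiM_I_finite) auto
  ultimately show ?thesis by (simp add: null_sets_def)
qed

lemma prod_if_mult_single:
  fixes g :: "'b \<Rightarrow> 'a::comm_monoid_mult"
  assumes "finite A" "i \<in> A"
  shows "(\<Prod>j\<in>A. if j = i then a * g j else g j) = a * (\<Prod>j\<in>A. g j)"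
proof -
  have "(\<Prod>j\<in>A. if j = i then a * g j else g j) = a * g i * (\<Prod>j\<in>A - {i}. g j)"
    using assms by (subst prod.remove[of _ i]) (auto intro!: prod.cong)
  also have "\<dots> = a * (\<Prod>j\<in>A. g j)"
    using assms by (subst (2) prod.remove[of _ i]) (auto simp: mult_ac)
  finally show ?thesis .
qed

lemma borel_measurable_tensor_integrand:
  assumes k: "\<And>i. i < n \<Longrightarrow> 0 \<le> k i \<and> k i < 2 ^ l"
  shows "tensor_integrand n l k e q \<eta> \<beta> \<rho> \<in> borel_measurable (\<Pi>\<^sub>M j\<in>{..<n}. lborel)"
proof -
  have coordinate: "(\<lambda>x. f (x j)) \<in> borel_measurable (\<Pi>\<^sub>M j\<in>{..<n}. lborel)"
    if "j < n" "f \<in> borel_measurable lborel" for j and f :: "real \<Rightarrow> complex"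
  proof -
    have "(\<lambda>x. x j) \<in> (\<Pi>\<^sub>M j\<in>{..<n}. lborel) \<rightarrow>\<^sub>M lborel"
      by (rule measurable_component_singleton) (use that in simp)
    from measurable_compose[OF this that(2)] show ?thesis .
  qed
  have "(\<lambda>x. theta_wave_01 l (k j) (e j) (q j) (x j)) \<in> borel_measurable (\<Pi>\<^sub>M j\<in>{..<n}. lborel)"
    "(\<lambda>x. theta_deriv_wave_01 l (k j) (e j) (q j) (x j)) \<in> borel_measurable (\<Pi>\<^sub>M j\<in>{..<n}. lborel)"
    if "j < n" for j
    using k[OF that] that
    by (auto intro!: coordinate borel_measurable_theta_wave_01)
  then show ?thesis
    unfolding tensor_integrand_def[abs_def]
    by (intro borel_measurable_add borel_measurable_sum borel_measurable_times
        borel_measurable_const borel_measurable_prod) auto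
qed

lemma integral_tensor_integrand:
  assumes k: "\<And>i. i < n \<Longrightarrow> 0 \<le> k i \<and> k i < 2 ^ l"
  shows "integral\<^sup>L (\<Pi>\<^sub>M j\<in>{..<n}. lborel) (tensor_integrand n l k e q \<eta> \<beta> \<rho>) =
    ((\<Sum>i<n. grad_coeff n l q \<eta> \<beta> i * (- fourier_rate (q i)))
       + complex_of_real (2 powr - real l * xi_norm n q * \<rho>)) *
    (\<Prod>j<n. theta_coeff l (k j) (e j) (q j))"
proof -
  interpret product_sigma_finite "\<lambda>_. lborel :: real measure"
    by (simp add: product_sigma_finite_def sigma_finite_lborel)
  define factor where "factor i j =
    (if j = i then theta_deriv_wave_01 else theta_wave_01) l (k j) (e j) (q j)" for i j
  have factor: "integrable lborel (factor i j)" "integrable lborel (theta_wave_01 l (k j) (e j) (q j))"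
    if "j < n" for i j
    using k[OF that] integrable_theta_wave_01 integrable_theta_deriv_wave_01
    by (auto simp: factor_def)
  have int_factor: "integral\<^sup>L (\<Pi>\<^sub>M j\<in>{..<n}. lborel) (\<lambda>x. \<Prod>j<n. factor i j (x j)) =
      - fourier_rate (q i) * (\<Prod>j<n. theta_coeff l (k j) (e j) (q j))" if i: "i < n" for i
  proof -
    have "integral\<^sup>L (\<Pi>\<^sub>M j\<in>{..<n}. lborel) (\<lambda>x. \<Prod>j<n. factor i j (x j)) =
        (\<Prod>j<n. integral\<^sup>L lborel (factor i j))"
      by (rule product_integral_prod) (auto intro: factor)
    also have "\<dots> = (\<Prod>j<n. if j = i then - fourier_rate (q i) * theta_coeff l (k j) (e j) (q j)
                 else theta_coeff l (k j) (e j) (q j))"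
      by (intro prod.cong refl)
         (use k in \<open>auto simp: factor_def integral_theta_wave_01 integral_theta_deriv_wave_01\<close>)
    finally show ?thesis using i by (simp add: prod_if_mult_single)
  qed
  have int_values: "integral\<^sup>L (\<Pi>\<^sub>M j\<in>{..<n}. lborel) (\<lambda>x. \<Prod>j<n. theta_wave_01 l (k j) (e j) (q j) (x j))
      = (\<Prod>j<n. theta_coeff l (k j) (e j) (q j))"
    using k by (subst product_integral_prod) (auto simp: factor integral_theta_wave_01 intro!: prod.cong)
  have "tensor_integrand n l k e q \<eta> \<beta> \<rho> = (\<lambda>x.
      (\<Sum>i<n. grad_coeff n l q \<eta> \<beta> i * (\<Prod>j<n. factor i j (x j)))
      + complex_of_real (2 powr - real l * xi_norm n q * \<rho>) *
        (\<Prod>j<n. theta_wave_01 l (k j) (e j) (q j) (x j)))"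
    by (simp add: tensor_integrand_def factor_def fun_eq_iff)
  moreover have "integrable (\<Pi>\<^sub>M j\<in>{..<n}. lborel) (\<lambda>x. \<Prod>j<n. factor i j (x j))"
    "integrable (\<Pi>\<^sub>M j\<in>{..<n}. lborel) (\<lambda>x. \<Prod>j<n. theta_wave_01 l (k j) (e j) (q j) (x j))" for i
    by (auto intro!: product_integrable_prod factor)
  ultimately show ?thesis
    by (simp add: integral_add integral_sum integrable_sum int_factor int_values
        sum_distrib_right distrib_right mult.assoc)
qed

lemma bil_psi_iso_hat_xi_hat_eq:
  assumes k: "\<And>i. i < n \<Longrightarrow> 0 \<le> k i \<and> k i < 2 ^ l"
  shows "bil n \<eta> \<beta> \<rho> (psi_iso_hat n l k e) (xi_hat n q) =
    ((\<Sum>i<n. grad_coeff n l q \<eta> \<beta> i * (- fourier_rate (q i)))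
       + complex_of_real (2 powr - real l * xi_norm n q * \<rho>)) *
    (\<Prod>j<n. theta_coeff l (k j) (e j) (q j))"
proof -
  define M where "M = (\<Pi>\<^sub>M j\<in>{..<n}. (lborel :: real measure))"
  define N where "N = (\<Union>i<n. {x \<in> space M. x i \<in> theta_kinks l (k i)})"
  define f where "f x = indicator (dom_D n) x *\<^sub>R
      bil_integrand n \<eta> \<beta> \<rho> (psi_iso_hat n l k e) (xi_hat n q) x" for x
  have N: "N \<in> null_sets M"
    unfolding N_def M_def by (intro null_sets_UN' null_sets_PiM_lborel_coordinate) auto
  have g: "tensor_integrand n l k e q \<eta> \<beta> \<rho> \<in> borel_measurable M"
    unfolding M_def by (rule borel_measurable_tensor_integrand[OF k])
  have eq: "f x = tensor_integrand n l k e q \<eta> \<beta> \<rho> x" if "x \<in> space M" "x \<notin> N" for x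
    unfolding f_def using that k
    by (intro indicator_bil_integrand_eq_tensor_integrand) (auto simp: N_def M_def space_PiM PiE_def)
  have "bil n \<eta> \<beta> \<rho> (psi_iso_hat n l k e) (xi_hat n q) = integral\<^sup>L (completion M) f"
    unfolding bil_eq_integral_bil_integrand leb_n_def M_def f_def ..
  also have "\<dots> = integral\<^sup>L (completion M) (tensor_integrand n l k e q \<eta> \<beta> \<rho>)"
    using eq by (intro integral_cong_AE borel_measurable_completion_AE_eq[OF g N]
        measurable_completion[OF g] AE_completion AE_I'[OF N]) auto
  also have "\<dots> = integral\<^sup>L M (tensor_integrand n l k e q \<eta> \<beta> \<rho>)"
    by (rule integral_completion[OF g])
  finally show ?thesis
    using integral_tensor_integrand[OF k] by (simp add: M_def)
qed

lemma cmod_bil_psi_iso_hat_xi_hat_sq: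
  assumes k: "\<And>i. i < n \<Longrightarrow> 0 \<le> k i \<and> k i < 2 ^ l"
  shows "(cmod (bil n \<eta> \<beta> \<rho> (psi_iso_hat n l k e) (xi_hat n q)))\<^sup>2 =
    (2 powr - real l * xi_norm n q)\<^sup>2 *
    ((\<eta> * 4 * pi\<^sup>2 * qnorm2_sq n q + \<rho>)\<^sup>2 + (2 * pi * (\<Sum>i<n. \<beta> i * of_int (q i)))\<^sup>2) *
    (\<Prod>j<n. (cmod (theta_coeff l (k j) (e j) (q j)))\<^sup>2)"
proof -
  have "grad_coeff n l q \<eta> \<beta> i * (- fourier_rate (q i)) =
      complex_of_real (2 powr - real l * xi_norm n q) *
      Complex (\<eta> * 4 * pi\<^sup>2 * (of_int (q i))\<^sup>2) (2 * pi * \<beta> i * of_int (q i))" for i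
    by (simp add: grad_coeff_def fourier_rate_def complex_eq_iff power2_eq_square algebra_simps)
  then have coeff: "(\<Sum>i<n. grad_coeff n l q \<eta> \<beta> i * (- fourier_rate (q i)))
      + complex_of_real (2 powr - real l * xi_norm n q * \<rho>) =
     complex_of_real (2 powr - real l * xi_norm n q) *
     Complex (\<eta> * 4 * pi\<^sup>2 * qnorm2_sq n q + \<rho>) (2 * pi * (\<Sum>i<n. \<beta> i * of_int (q i)))"
    unfolding sum_distrib_left[symmetric]
    by (simp add: complex_eq_iff Re_sum Im_sum qnorm2_sq_def sum_distrib_left algebra_simps)
  have "bil n \<eta> \<beta> \<rho> (psi_iso_hat n l k e) (xi_hat n q) =
     complex_of_real (2 powr - real l * xi_norm n q) *
     Complex (\<eta> * 4 * pi\<^sup>2 * qnorm2_sq n q + \<rho>) (2 * pi * (\<Sum>i<n. \<beta> i * of_int (q i))) *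
     (\<Prod>j<n. theta_coeff l (k j) (e j) (q j))"
    using bil_psi_iso_hat_xi_hat_eq[OF k, where \<eta>=\<eta> and \<beta>=\<beta> and \<rho>=\<rho> and e=e and q=q] coeff
    by simp
  then show ?thesis
    by (simp add: norm_mult prod_norm[symmetric] power_mult_distrib cmod_power2 prod_power_distrib)
qed

section \<open>Estimates\<close>

lemma two_powr_half_sq: "(2 powr (real l / 2))\<^sup>2 = (2::real) ^ l"
proof -
  have "(2 powr (real l / 2))\<^sup>2 = (2::real) powr (real 2 * (real l / 2))"
    by (subst powr_power) auto
  then show ?thesis by (simp add: powr_realpow)
qed

lemma theta_coeff_sq_le:
  assumes k: "0 \<le> k" "k < 2 ^ l"
  shows "(cmod (theta_coeff l k e m))\<^sup>2 \<le> 4 / 2 ^ l"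
proof -
  have "(cmod (theta_coeff l k e m))\<^sup>2 \<le> (2 * 2 powr (real l / 2) / 2 ^ l)\<^sup>2"
    by (rule power_mono[OF norm_theta_coeff_le[OF k]]) simp
  also have "\<dots> = 4 * (2 powr (real l / 2))\<^sup>2 / ((2::real) ^ l)\<^sup>2"
    by (simp add: power_divide power_mult_distrib)
  also have "\<dots> = 4 / 2 ^ l"
    unfolding two_powr_half_sq by (simp add: power2_eq_square)
  finally show ?thesis .
qed

lemma theta_coeff_sq_le_freq:
  assumes k: "0 \<le> k" "k < 2 ^ l" and m: "m \<noteq> 0"
  shows "(cmod (theta_coeff l k e m))\<^sup>2 \<le> 4 * (2 ^ l) ^ 3 / (real_of_int m) ^ 4"
proof -
  have "(cmod (theta_coeff l k e m))\<^sup>2 \<le> (2 * 2 powr (real l / 2) * 2 ^ l / (real_of_int m)\<^sup>2)\<^sup>2"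
    by (rule power_mono[OF norm_theta_coeff_le_freq[OF k m]]) simp
  also have "\<dots> = 4 * (2 powr (real l / 2))\<^sup>2 * ((2::real) ^ l)\<^sup>2 / (real_of_int m) ^ 4"
    by (simp add: power_divide power_mult_distrib flip: power_mult)
  also have "\<dots> = 4 * (2 ^ l) ^ 3 / (real_of_int m) ^ 4"
    unfolding two_powr_half_sq by (simp add: power2_eq_square power3_eq_cube)
  finally show ?thesis .
qed

lemma theta_coeff_sq_le_inv_freq:
  assumes k: "0 \<le> k" "k < 2 ^ l" and m: "m \<noteq> 0"
  shows "(cmod (theta_coeff l k e m))\<^sup>2 \<le> 4 / \<bar>real_of_int m\<bar>"
proof -
  define M where "M = \<bar>real_of_int m\<bar>"
  have M: "0 < M" using m by (simp add: M_def)
  show ?thesis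
  proof (cases "M \<le> 2 ^ l")
    case True
    then have "4 / (2 ^ l) \<le> 4 / M"
      using M by (intro divide_left_mono) auto
    then show ?thesis using theta_coeff_sq_le[OF k, of e m] by (simp add: M_def)
  next
    case False
    then have "(2 ^ l / M) ^ 3 \<le> 1" using M by (intro power_le_one) auto
    then have "4 / M * (2 ^ l / M) ^ 3 \<le> 4 / M"
      using M by (intro mult_left_le) auto
    moreover have "4 * (2 ^ l) ^ 3 / M ^ 4 = 4 / M * (2 ^ l / M) ^ 3"
      by (simp add: power_divide power4_eq_xxxx power3_eq_cube)
    ultimately show ?thesis using theta_coeff_sq_le_freq[OF k m, of e] by (simp add: M_def)
  qed
qed

lemma theta_coeff_sq_le_max_freq:
  assumes k: "0 \<le> k" "k < 2 ^ l" and m: "m \<noteq> 0"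
  shows "(cmod (theta_coeff l k e m))\<^sup>2 \<le> 4 * (2 ^ l)\<^sup>2 / \<bar>real_of_int m\<bar> ^ 3"
proof -
  define M where "M = \<bar>real_of_int m\<bar>"
  have M: "0 < M" using m by (simp add: M_def)
  define P :: real where "P = 2 ^ l"
  have P: "0 < P" by (simp add: P_def)
  show ?thesis
  proof (cases "M \<le> P")
    case True
    have "4 / P = 4 * P\<^sup>2 / P ^ 3"
      using P by (simp add: power2_eq_square power3_eq_cube)
    also have "\<dots> \<le> 4 * P\<^sup>2 / M ^ 3"
      using True M P by (intro divide_left_mono power_mono) auto
    finally show ?thesis using theta_coeff_sq_le[OF k, of e m] by (simp add: M_def P_def)
  next
    case False
    have "4 * P ^ 3 / M ^ 4 = 4 * P\<^sup>2 / M ^ 3 * (P / M)"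
      by (simp add: power2_eq_square power3_eq_cube power4_eq_xxxx)
    also have "\<dots> \<le> 4 * P\<^sup>2 / M ^ 3"
      using False M P by (intro mult_left_le) auto
    finally show ?thesis using theta_coeff_sq_le_freq[OF k m, of e] by (simp add: M_def P_def)
  qed
qed

lemma xi_norm_sq: "(xi_norm n q)\<^sup>2 = 1 / (1 + 4 * pi\<^sup>2 * qnorm2_sq n q)"
proof -
  have pos: "0 < 1 + (2 * pi) ^ 2 * qnorm2_sq n q"
    by (intro add_pos_nonneg mult_nonneg_nonneg) (auto simp: qnorm2_sq_def intro!: sum_nonneg)
  have "(xi_norm n q)\<^sup>2 = (1 + (2 * pi) ^ 2 * qnorm2_sq n q) powr (real 2 * (-1/2))"
    unfolding xi_norm_def using pos by (subst powr_power) auto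
  also have "\<dots> = 1 / (1 + (2 * pi) ^ 2 * qnorm2_sq n q)"
    using pos by (simp add: powr_minus_divide)
  finally show ?thesis by (simp add: power_mult_distrib)
qed

lemma qnorm0_le: "qnorm0 n q \<le> n"
proof -
  have "card {i. i < n \<and> q i \<noteq> 0} \<le> card {..<n}" by (rule card_mono) auto
  then show ?thesis by (simp add: qnorm0_def)
qed

lemma qhat_pow_pos: "0 < qhat_pow n q p"
  unfolding qhat_pow_def by (intro prod_pos) auto

lemma prod_if_nonzero_split:
  fixes f :: "nat \<Rightarrow> real"
  shows "(\<Prod>j<n. if q j \<noteq> 0 then f j else c) =
    (\<Prod>j\<in>{i. i < n \<and> q i \<noteq> 0}. f j) * c ^ (n - qnorm0 n q)"
proof -
  have "(\<Prod>j<n. if q j \<noteq> 0 then f j else c) =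
      prod f ({..<n} \<inter> {x. q x \<noteq> 0}) * prod (\<lambda>_. c) ({..<n} \<inter> - {x. q x \<noteq> 0})"
    by (rule prod.If_cases) simp
  also have "{..<n} \<inter> {x. q x \<noteq> 0} = {i. i < n \<and> q i \<noteq> 0}" by auto
  also have "{..<n} \<inter> - {x. q x \<noteq> 0} = {..<n} - {i. i < n \<and> q i \<noteq> 0}" by auto
  also have "prod (\<lambda>_. c) ({..<n} - {i. i < n \<and> q i \<noteq> 0}) = c ^ (n - qnorm0 n q)"
  proof -
    have "card ({..<n} - {i. i < n \<and> q i \<noteq> 0}) = card {..<n} - card {i. i < n \<and> q i \<noteq> 0}"
      by (rule card_Diff_subset) auto
    then show ?thesis by (simp add: qnorm0_def)
  qed
  finally show ?thesis .
qed

lemma two_pow_pow_eq_powr: "((2::real) ^ l) ^ j = 2 powr (real l * real j)"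
  by (simp add: powr_realpow flip: power_mult of_nat_mult)

lemma two_pow_pow_ratio:
  assumes "s \<le> n"
  shows "((2::real) ^ l) ^ (3 * s) / (((2::real) ^ l) ^ 2 * ((2::real) ^ l) ^ (n - s))
     = 2 powr ((4 * real s - real n - 2) * real l)"
proof -
  have "((2::real) ^ l) ^ (3 * s) / (((2::real) ^ l) ^ 2 * ((2::real) ^ l) ^ (n - s)) =
      2 powr (real l * real (3 * s) - (real l * real 2 + real l * real (n - s)))"
    unfolding two_pow_pow_eq_powr by (simp add: powr_diff powr_add)
  also have "real l * real (3 * s) - (real l * real 2 + real l * real (n - s)) =
      (4 * real s - real n - 2) * real l"
    using assms by (simp add: of_nat_diff algebra_simps)
  finally show ?thesis .
qed

lemma two_powr_mult_le_one_plus: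
  fixes c l L :: real
  assumes "0 \<le> l" "l \<le> L"
  shows "2 powr (c * l) \<le> 1 + 2 powr (c * L)"
proof (cases "0 \<le> c")
  case True
  then have "2 powr (c * l) \<le> 2 powr (c * L)" using assms by (simp add: mult_left_mono)
  then show ?thesis by (smt (verit) powr_ge_zero)
next
  case False
  then have "2 powr (c * l) \<le> 2 powr 0" using assms by (intro powr_mono) (auto simp: mult_nonpos_nonneg)
  then show ?thesis by (smt (verit) powr_ge_zero powr_zero_eq_one)
qed

lemma two_powr_neg_sq: "(2 powr - real l)\<^sup>2 = 1 / ((2::real) ^ l)\<^sup>2"
  by (simp add: powr_minus_divide powr_realpow power_divide)

definition tensor_coeff_sq :: "nat \<Rightarrow> nat \<Rightarrow> (nat \<Rightarrow> int) \<Rightarrow> (nat \<Rightarrow> nat) \<Rightarrow> (nat \<Rightarrow> int) \<Rightarrow> real" where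
  "tensor_coeff_sq n l k e q =
     (2 powr - real l)\<^sup>2 * (\<Prod>j<n. (cmod (theta_coeff l (k j) (e j) (q j)))\<^sup>2)"

lemma tensor_coeff_sq_nonneg: "0 \<le> tensor_coeff_sq n l k e q"
  unfolding tensor_coeff_sq_def by (intro mult_nonneg_nonneg prod_nonneg) auto

lemma tensor_coeff_sq_le_dyadic:
  assumes k: "\<And>i. i < n \<Longrightarrow> 0 \<le> k i \<and> k i < 2 ^ l" and l0: "l0 \<le> l"
  shows "tensor_coeff_sq n l k e q \<le> 4 ^ n * 2 powr (- ((2 + real n) * real l0))"
proof -
  define P :: real where "P = 2 ^ l"
  have P: "0 < P" by (simp add: P_def)
  have "(\<Prod>j<n. (cmod (theta_coeff l (k j) (e j) (q j)))\<^sup>2) \<le> (\<Prod>j<n. 4 / P)"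
    by (intro prod_mono) (use k in \<open>auto simp: P_def intro: theta_coeff_sq_le\<close>)
  then have "tensor_coeff_sq n l k e q \<le> 1 / P\<^sup>2 * (4 / P) ^ n"
    unfolding tensor_coeff_sq_def two_powr_neg_sq P_def[symmetric]
    by (intro mult_left_mono) auto
  also have "\<dots> = 4 ^ n * (1 / P ^ (n + 2))"
    by (simp add: power_divide power_add field_simps power2_eq_square)
  also have "1 / P ^ (n + 2) = 2 powr (- (real l * real (n + 2)))"
    by (simp only: P_def two_pow_pow_eq_powr powr_minus_divide)
  also have "4 ^ n * 2 powr (- (real l * real (n + 2))) \<le> 4 ^ n * 2 powr (- ((2 + real n) * real l0))"
  proof -
    have "(2 + real n) * real l0 \<le> real l * real (n + 2)"
      using l0 by (simp add: mult.commute mult_left_mono)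
    then show ?thesis by (intro mult_left_mono powr_mono) auto
  qed
  finally show ?thesis .
qed

lemma tensor_coeff_sq_le_finest:
  assumes k: "\<And>i. i < n \<Longrightarrow> 0 \<le> k i \<and> k i < 2 ^ l" and lL: "l \<le> L"
  shows "tensor_coeff_sq n l k e q
     \<le> 4 ^ n * (1 + 2 powr (2 * (- real n / 2 + 2 * real (qnorm0 n q) - 1) * real L)) / qhat_pow n q 4"
proof -
  define P :: real where "P = 2 ^ l"
  have P: "0 < P" by (simp add: P_def)
  define s where "s = qnorm0 n q"
  have sn: "s \<le> n" using qnorm0_le by (simp add: s_def)
  have "(\<Prod>j<n. (cmod (theta_coeff l (k j) (e j) (q j)))\<^sup>2) \<le>
      (\<Prod>j<n. if q j \<noteq> 0 then 4 * P ^ 3 / real_of_int (q j) ^ 4 else 4 / P)"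
    by (intro prod_mono) (use k in \<open>auto simp: P_def intro: theta_coeff_sq_le theta_coeff_sq_le_freq\<close>)
  also have "\<dots> = (4 * P ^ 3) ^ s / qhat_pow n q 4 * (4 / P) ^ (n - s)"
    unfolding prod_if_nonzero_split
    by (simp add: prod_dividef qhat_pow_def s_def qnorm0_def)
  finally have "tensor_coeff_sq n l k e q \<le> 1 / P\<^sup>2 * ((4 * P ^ 3) ^ s / qhat_pow n q 4 * (4 / P) ^ (n - s))"
    unfolding tensor_coeff_sq_def two_powr_neg_sq P_def[symmetric]
    by (intro mult_left_mono) auto
  also have "\<dots> = 4 ^ n * (P ^ (3 * s) / (P ^ 2 * P ^ (n - s))) / qhat_pow n q 4"
  proof -
    have "(4::real) ^ s * 4 ^ (n - s) = 4 ^ n" using sn by (simp flip: power_add)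
    then show ?thesis using P qhat_pow_pos[of n q 4]
      by (simp add: power_mult_distrib power_divide field_simps flip: power_mult)
  qed
  also have "\<dots> = 4 ^ n * 2 powr ((4 * real s - real n - 2) * real l) / qhat_pow n q 4"
    unfolding P_def two_pow_pow_ratio[OF sn] ..
  also have "\<dots> \<le> 4 ^ n * (1 + 2 powr ((4 * real s - real n - 2) * real L)) / qhat_pow n q 4"
    using lL qhat_pow_pos[of n q 4]
    by (intro divide_right_mono mult_left_mono two_powr_mult_le_one_plus) auto
  finally show ?thesis
    by (simp add: s_def algebra_simps)
qed

lemma qnorm_inf_attained:
  assumes "\<exists>i<n. q i \<noteq> 0"
  obtains i0 where "i0 < n" "q i0 \<noteq> 0" "qnorm_inf n q = \<bar>real_of_int (q i0)\<bar>"
    "\<And>j. j < n \<Longrightarrow> \<bar>real_of_int (q j)\<bar> \<le> qnorm_inf n q"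
proof -
  have "{..<n} \<noteq> {}" using assms by auto
  then have "qnorm_inf n q \<in> (\<lambda>i. \<bar>real_of_int (q i)\<bar>) ` {..<n}"
    unfolding qnorm_inf_def by (intro Max_in) auto
  then obtain i0 where i0: "i0 < n" "qnorm_inf n q = \<bar>real_of_int (q i0)\<bar>" by auto
  have le: "\<bar>real_of_int (q j)\<bar> \<le> qnorm_inf n q" if "j < n" for j
    unfolding qnorm_inf_def using that by (intro Max_ge) auto
  obtain j1 where "j1 < n" "q j1 \<noteq> 0" using assms by auto
  with le[of j1] i0 have "q i0 \<noteq> 0" by auto
  then show ?thesis using i0 le that by blast
qed

lemma theta_coeff_sq_le_weight:
  assumes k: "0 \<le> k" "k < 2 ^ l" and l0: "l0 \<le> l"
  shows "(cmod (theta_coeff l k e m))\<^sup>2 \<le>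
    (if m \<noteq> 0 then 4 / \<bar>real_of_int m\<bar> else 4 * 2 powr (- real l0))"
proof (cases "m = 0")
  case True
  have "4 / 2 ^ l = 4 * 2 powr (- real l)" by (simp add: powr_minus_divide powr_realpow)
  also have "\<dots> \<le> 4 * 2 powr (- real l0)" using l0 by simp
  finally show ?thesis using True theta_coeff_sq_le[OF k, of e m] by simp
qed (simp add: theta_coeff_sq_le_inv_freq[OF k])

lemma theta_coeff_prod_le_coarsest:
  assumes k: "\<And>i. i < n \<Longrightarrow> 0 \<le> k i \<and> k i < 2 ^ l" and l0: "l0 \<le> l"
    and q: "\<exists>i<n. q i \<noteq> 0"
  shows "(\<Prod>j<n. (cmod (theta_coeff l (k j) (e j) (q j)))\<^sup>2) \<le> (2 ^ l)\<^sup>2 / (qnorm_inf n q)\<^sup>2 *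
    (4 ^ qnorm0 n q / qhat_pow n q 1 * (4 * 2 powr (- real l0)) ^ (n - qnorm0 n q))"
proof -
  define M where "M = qnorm_inf n q"
  obtain i0 where i0: "i0 < n" "q i0 \<noteq> 0" "M = \<bar>real_of_int (q i0)\<bar>"
    using qnorm_inf_attained[OF q] unfolding M_def by metis
  define w where "w j = (if q j \<noteq> 0 then 4 / \<bar>real_of_int (q j)\<bar> else 4 * 2 powr (- real l0))" for j
  text \<open>The largest frequency \<open>q\<^sub>i\<^sub>0\<close> pays for the factor \<open>2\<^sup>2\<^sup>l / \<parallel>q\<parallel>\<^sub>\<infinity>\<^sup>2\<close>.\<close>
  have "(cmod (theta_coeff l (k j) (e j) (q j)))\<^sup>2 \<le> (if j = i0 then (2 ^ l)\<^sup>2 / M\<^sup>2 else 1) * w j"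
    if j: "j < n" for j
  proof -
    have kj: "0 \<le> k j" "k j < 2 ^ l" using k[OF j] by auto
    have "(2 ^ l)\<^sup>2 / M\<^sup>2 * (4 / M) = 4 * (2 ^ l)\<^sup>2 / M ^ 3"
      by (simp add: power2_eq_square power3_eq_cube)
    then show ?thesis
      using i0 theta_coeff_sq_le_max_freq[OF kj, where e="e j" and m="q j"]
        theta_coeff_sq_le_weight[OF kj l0, where e="e j" and m="q j"]
      by (cases "j = i0") (simp_all add: w_def)
  qed
  then have "(\<Prod>j<n. (cmod (theta_coeff l (k j) (e j) (q j)))\<^sup>2) \<le>
      (\<Prod>j<n. (if j = i0 then (2 ^ l)\<^sup>2 / M\<^sup>2 else 1) * w j)"
    by (intro prod_mono) auto
  also have "\<dots> = (2 ^ l)\<^sup>2 / M\<^sup>2 * (\<Prod>j<n. w j)"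
    using i0 by (simp add: prod.distrib prod.delta)
  also have "(\<Prod>j<n. w j) = 4 ^ qnorm0 n q / qhat_pow n q 1 * (4 * 2 powr (- real l0)) ^ (n - qnorm0 n q)"
    unfolding w_def prod_if_nonzero_split by (simp add: prod_dividef qhat_pow_def qnorm0_def)
  finally show ?thesis by (simp add: M_def)
qed

lemma tensor_coeff_sq_le_coarsest:
  assumes k: "\<And>i. i < n \<Longrightarrow> 0 \<le> k i \<and> k i < 2 ^ l" and l0: "l0 \<le> l"
    and q: "\<exists>i<n. q i \<noteq> 0"
  shows "tensor_coeff_sq n l k e q
     \<le> 4 ^ n * 2 powr (- (real n - real (qnorm0 n q)) * real l0) / ((qnorm_inf n q)\<^sup>2 * qhat_pow n q 1)"
proof -
  define P :: real where "P = 2 ^ l"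
  define s where "s = qnorm0 n q"
  have sn: "s \<le> n" using qnorm0_le by (simp add: s_def)
  obtain i0 where "i0 < n" "q i0 \<noteq> 0" "qnorm_inf n q = \<bar>real_of_int (q i0)\<bar>"
    using qnorm_inf_attained[OF q] by metis
  then have M: "1 \<le> qnorm_inf n q" by linarith
  have "tensor_coeff_sq n l k e q \<le> 1 / P\<^sup>2 * (P\<^sup>2 / (qnorm_inf n q)\<^sup>2 *
      (4 ^ s / qhat_pow n q 1 * (4 * 2 powr (- real l0)) ^ (n - s)))"
    unfolding tensor_coeff_sq_def two_powr_neg_sq P_def s_def
    by (intro mult_left_mono theta_coeff_prod_le_coarsest k l0 q) auto
  also have "\<dots> = 4 ^ n * (2 powr (- real l0)) ^ (n - s) / ((qnorm_inf n q)\<^sup>2 * qhat_pow n q 1)"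
  proof -
    have "(4::real) ^ s * 4 ^ (n - s) = 4 ^ n" using sn by (simp flip: power_add)
    then show ?thesis using M qhat_pow_pos[of n q 1]
      by (simp add: P_def power_mult_distrib field_simps)
  qed
  also have "(2 powr (- real l0)) ^ (n - s) = 2 powr (- (real n - real s) * real l0)"
    using sn by (subst powr_power) (auto simp: of_nat_diff algebra_simps)
  finally show ?thesis by (simp add: s_def)
qed

lemma symbol_sq_le:
  fixes a Q B C \<eta> \<rho> :: real
  assumes a: "1 \<le> a" and Q: "1 \<le> Q" and B: "0 \<le> B" and C: "C\<^sup>2 \<le> B * Q"
  shows "((\<eta> * 4 * a * Q + \<rho>)\<^sup>2 + 4 * a * C\<^sup>2) / (1 + 4 * a * Q)
     \<le> 8 * a * Q * (\<eta>\<^sup>2 + B / Q + \<rho>\<^sup>2 / Q\<^sup>2)"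
proof -
  have "(\<eta> * 4 * a * Q + \<rho>)\<^sup>2 \<le> 2 * (\<eta> * 4 * a * Q)\<^sup>2 + 2 * \<rho>\<^sup>2"
    using sum_squares_ge_zero[of 0 "\<eta> * 4 * a * Q - \<rho>"] by (simp add: power2_eq_square algebra_simps)
  moreover have "4 * a * C\<^sup>2 \<le> 32 * a\<^sup>2 * (B * Q)"
  proof -
    have "4 * a * C\<^sup>2 \<le> 4 * a * (B * Q)" using C a by (intro mult_left_mono) auto
    also have "\<dots> \<le> 32 * a\<^sup>2 * (B * Q)"
      using a B Q by (intro mult_right_mono) (auto simp: power2_eq_square)
    finally show ?thesis .
  qed
  moreover have "2 * \<rho>\<^sup>2 \<le> 32 * a\<^sup>2 * \<rho>\<^sup>2"
  proof -
    have "1 * 1 \<le> a * a" using a by (intro mult_mono) auto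
    then show ?thesis by (intro mult_right_mono) (auto simp: power2_eq_square)
  qed
  ultimately have num: "(\<eta> * 4 * a * Q + \<rho>)\<^sup>2 + 4 * a * C\<^sup>2 \<le> 32 * a\<^sup>2 * (\<eta>\<^sup>2 * Q\<^sup>2 + B * Q + \<rho>\<^sup>2)"
    by (simp add: power_mult_distrib algebra_simps)
  have "((\<eta> * 4 * a * Q + \<rho>)\<^sup>2 + 4 * a * C\<^sup>2) / (1 + 4 * a * Q)
      \<le> 32 * a\<^sup>2 * (\<eta>\<^sup>2 * Q\<^sup>2 + B * Q + \<rho>\<^sup>2) / (4 * a * Q)"
    using num a Q B by (intro frac_le) auto
  also have "\<dots> = 8 * a * Q * (\<eta>\<^sup>2 + B / Q + \<rho>\<^sup>2 / Q\<^sup>2)"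
    using a Q by (simp add: field_simps power2_eq_square)
  finally show ?thesis .
qed

lemma J_iso_memD:
  assumes "(l, k, e) \<in> J_iso n l0 L"
  shows "l0 \<le> l" "l < L" "\<And>i. i < n \<Longrightarrow> 0 \<le> k i \<and> k i < 2 ^ l"
  using assms by (auto simp: J_iso_def PiE_def Pi_def)

lemma J_iso_nonempty:
  assumes "l0 < L"
  shows "J_iso n l0 L \<noteq> {}"
proof -
  have "(l0, restrict (\<lambda>_. 0) {..<n}, restrict (\<lambda>_. 0) {..<n}) \<in> J_iso n l0 L"
    using assms by (auto simp: J_iso_def)
  then show ?thesis by blast
qed

lemma mu_le_if_bounded:
  assumes "l0 < L"
    and "\<And>l k e. (l, k, e) \<in> J_iso n l0 L \<Longrightarrow>
      (cmod (bil n \<eta> \<beta> \<rho> (psi_iso_hat n l k e) (xi_hat n q)))\<^sup>2 \<le> B"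
  shows "mu n l0 L \<eta> \<beta> \<rho> q \<le> B"
  unfolding mu_def using assms by (intro cSUP_least J_iso_nonempty) auto

lemma cmod_bil_zero_mode_sq_le:
  assumes J: "(l, k, e) \<in> J_iso n l0 L"
  shows "(cmod (bil n \<eta> \<beta> \<rho> (psi_iso_hat n l k e) (xi_hat n (\<lambda>_. 0))))\<^sup>2
     \<le> 4 ^ n * \<rho>\<^sup>2 * 2 powr (- ((2 + real n) * real l0))"
proof -
  have "qnorm2_sq n (\<lambda>_. 0) = 0" by (simp add: qnorm2_sq_def)
  then have "(cmod (bil n \<eta> \<beta> \<rho> (psi_iso_hat n l k e) (xi_hat n (\<lambda>_. 0))))\<^sup>2 =
      \<rho>\<^sup>2 * tensor_coeff_sq n l k e (\<lambda>_. 0)"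
    using cmod_bil_psi_iso_hat_xi_hat_sq[OF J_iso_memD(3)[OF J], where q="\<lambda>_. 0" and e=e
        and \<eta>=\<eta> and \<beta>=\<beta> and \<rho>=\<rho>]
    by (simp add: xi_norm_def tensor_coeff_sq_def)
  also have "\<dots> \<le> \<rho>\<^sup>2 * (4 ^ n * 2 powr (- ((2 + real n) * real l0)))"
    by (intro mult_left_mono tensor_coeff_sq_le_dyadic J_iso_memD[OF J]) auto
  finally show ?thesis by (simp add: mult_ac)
qed

lemma one_le_qnorm2_sq:
  assumes "\<exists>i<n. q i \<noteq> 0"
  shows "1 \<le> qnorm2_sq n q"
proof -
  obtain i where i: "i < n" "q i \<noteq> 0" using assms by auto
  then have "1 \<le> \<bar>real_of_int (q i)\<bar>" by linarith
  then have "1 \<le> (real_of_int (q i))\<^sup>2" using one_le_power[of "\<bar>real_of_int (q i)\<bar>" 2] by simp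
  also have "\<dots> \<le> qnorm2_sq n q" unfolding qnorm2_sq_def using i by (intro member_le_sum) auto
  finally show ?thesis .
qed

lemma tensor_coeff_sq_le_min:
  assumes J: "(l, k, e) \<in> J_iso n l0 L" and q: "\<exists>i<n. q i \<noteq> 0"
  shows "tensor_coeff_sq n l k e q \<le> 4 ^ n *
    min ((1 + 2 powr (2 * (- real n / 2 + 2 * real (qnorm0 n q) - 1) * real L)) / qhat_pow n q 4)
        (2 powr (- (real n - real (qnorm0 n q)) * real l0) / ((qnorm_inf n q)\<^sup>2 * qhat_pow n q 1))"
  using tensor_coeff_sq_le_finest[OF J_iso_memD(3)[OF J] less_imp_le[OF J_iso_memD(2)[OF J]]]
    tensor_coeff_sq_le_coarsest[OF J_iso_memD(3)[OF J] J_iso_memD(1)[OF J] q]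
  by (simp add: min_def)

lemma cmod_bil_sq_le:
  assumes J: "(l, k, e) \<in> J_iso n l0 L" and q: "\<exists>i<n. q i \<noteq> 0"
  shows "(cmod (bil n \<eta> \<beta> \<rho> (psi_iso_hat n l k e) (xi_hat n q)))\<^sup>2
     \<le> 8 * pi\<^sup>2 * 4 ^ n *
       (\<eta>\<^sup>2 + (\<Sum>i<n. (\<beta> i)\<^sup>2) / qnorm2_sq n q + \<rho>\<^sup>2 / (qnorm2_sq n q)\<^sup>2) *
       min ((1 + 2 powr (2 * (- real n / 2 + 2 * real (qnorm0 n q) - 1) * real L))
              * qnorm2_sq n q / qhat_pow n q 4)
           (2 powr (- (real n - real (qnorm0 n q)) * real l0) * qnorm2_sq n q
              / ((qnorm_inf n q)\<^sup>2 * qhat_pow n q 1))"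
proof -
  define Q where "Q = qnorm2_sq n q"
  define B where "B = (\<Sum>i<n. (\<beta> i)\<^sup>2)"
  define C where "C = (\<Sum>i<n. \<beta> i * of_int (q i))"
  define W where "W = \<eta>\<^sup>2 + B / Q + \<rho>\<^sup>2 / Q\<^sup>2"
  define M1 where "M1 = (1 + 2 powr (2 * (- real n / 2 + 2 * real (qnorm0 n q) - 1) * real L))"
  define M2 where "M2 = 2 powr (- (real n - real (qnorm0 n q)) * real l0)"
  have Q: "1 \<le> Q" unfolding Q_def by (rule one_le_qnorm2_sq[OF q])
  have B: "0 \<le> B" unfolding B_def by (intro sum_nonneg) auto
  have "(cmod (bil n \<eta> \<beta> \<rho> (psi_iso_hat n l k e) (xi_hat n q)))\<^sup>2 =
      ((\<eta> * 4 * pi\<^sup>2 * Q + \<rho>)\<^sup>2 + 4 * pi\<^sup>2 * C\<^sup>2) / (1 + 4 * pi\<^sup>2 * Q) * tensor_coeff_sq n l k e q"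
    using cmod_bil_psi_iso_hat_xi_hat_sq[OF J_iso_memD(3)[OF J], where q=q and e=e
        and \<eta>=\<eta> and \<beta>=\<beta> and \<rho>=\<rho>]
    by (simp add: tensor_coeff_sq_def Q_def C_def xi_norm_sq power_mult_distrib mult_ac)
  also have "\<dots> \<le> 8 * pi\<^sup>2 * Q * W * tensor_coeff_sq n l k e q"
    unfolding W_def using pi_gt3
    by (intro mult_right_mono symbol_sq_le Q B tensor_coeff_sq_nonneg)
       (simp_all add: B_def C_def Q_def qnorm2_sq_def Cauchy_Schwarz_ineq_sum one_le_power)
  also have "\<dots> \<le> 8 * pi\<^sup>2 * Q * W * (4 ^ n *
      min (M1 / qhat_pow n q 4) (M2 / ((qnorm_inf n q)\<^sup>2 * qhat_pow n q 1)))"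
    unfolding M1_def M2_def W_def using Q B
    by (intro mult_left_mono tensor_coeff_sq_le_min[OF J q] mult_nonneg_nonneg add_nonneg_nonneg) auto
  also have "\<dots> = 8 * pi\<^sup>2 * 4 ^ n * W *
      min (M1 * Q / qhat_pow n q 4) (M2 * Q / ((qnorm_inf n q)\<^sup>2 * qhat_pow n q 1))"
  proof -
    have Q_min: "Q * min (M1 / qhat_pow n q 4) (M2 / ((qnorm_inf n q)\<^sup>2 * qhat_pow n q 1)) =
        min (M1 * Q / qhat_pow n q 4) (M2 * Q / ((qnorm_inf n q)\<^sup>2 * qhat_pow n q 1))"
      using Q by (simp add: min_mult_distrib_left mult.commute)
    show ?thesis by (simp only: mult.assoc mult.left_commute flip: Q_min)
  qed
  finally show ?thesis by (simp add: Q_def B_def W_def M1_def M2_def)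
qed

lemma eight_pi_sq_four_pow_le:
  assumes n: "1 \<le> n"
  shows "8 * pi\<^sup>2 * 4 ^ n \<le> (1000::real) ^ n"
proof -
  have "pi\<^sup>2 \<le> 4\<^sup>2" using pi_less_4 by (intro power_mono) auto
  moreover have "(250::real) ^ 1 \<le> 250 ^ n" using n by (intro power_increasing) auto
  ultimately have "8 * pi\<^sup>2 * 4 ^ n \<le> (250::real) ^ n * 4 ^ n" by (intro mult_right_mono) auto
  then show ?thesis by (simp flip: power_mult_distrib)
qed

lemma mu_zero_mode_le:
  assumes "1 \<le> n" "l0 < L"
  shows "mu n l0 L \<eta> \<beta> \<rho> (\<lambda>_. 0) \<le> 1000 ^ n * \<rho>\<^sup>2 * 2 powr (- ((2 + real n) * real l0))"
proof (rule mu_le_if_bounded[OF assms(2)])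
  have "4 ^ n * \<rho>\<^sup>2 * 2 powr (- ((2 + real n) * real l0))
      \<le> 1000 ^ n * \<rho>\<^sup>2 * 2 powr (- ((2 + real n) * real l0))"
    by (intro mult_right_mono power_mono) auto
  then show "(cmod (bil n \<eta> \<beta> \<rho> (psi_iso_hat n l k e) (xi_hat n (\<lambda>_. 0))))\<^sup>2
      \<le> 1000 ^ n * \<rho>\<^sup>2 * 2 powr (- ((2 + real n) * real l0))"
    if "(l, k, e) \<in> J_iso n l0 L" for l k e
    using cmod_bil_zero_mode_sq_le[OF that, where \<eta>=\<eta> and \<beta>=\<beta> and \<rho>=\<rho>] by linarith
qed

lemma mu_nonzero_mode_le:
  assumes "1 \<le> n" "l0 < L" and q: "\<exists>i<n. q i \<noteq> 0"
  shows "mu n l0 L \<eta> \<beta> \<rho> q \<le> 1000 ^ n *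
            (\<eta>\<^sup>2 + (\<Sum>i<n. (\<beta> i)\<^sup>2) / qnorm2_sq n q + \<rho>\<^sup>2 / (qnorm2_sq n q)\<^sup>2) *
            min ((1 + 2 powr (2 * (- real n / 2 + 2 * real (qnorm0 n q) - 1) * real L))
                   * qnorm2_sq n q / qhat_pow n q 4)
                (2 powr (- (real n - real (qnorm0 n q)) * real l0) * qnorm2_sq n q
                   / ((qnorm_inf n q)\<^sup>2 * qhat_pow n q 1))"
proof (rule mu_le_if_bounded[OF assms(2)])
  define R where "R = (\<eta>\<^sup>2 + (\<Sum>i<n. (\<beta> i)\<^sup>2) / qnorm2_sq n q + \<rho>\<^sup>2 / (qnorm2_sq n q)\<^sup>2) *
            min ((1 + 2 powr (2 * (- real n / 2 + 2 * real (qnorm0 n q) - 1) * real L))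
                   * qnorm2_sq n q / qhat_pow n q 4)
                (2 powr (- (real n - real (qnorm0 n q)) * real l0) * qnorm2_sq n q
                   / ((qnorm_inf n q)\<^sup>2 * qhat_pow n q 1))"
  have "0 \<le> R"
    unfolding R_def using qhat_pow_pos[of n q 4] qhat_pow_pos[of n q 1]
    by (auto simp: qnorm2_sq_def intro!: add_nonneg_nonneg divide_nonneg_nonneg sum_nonneg
        mult_nonneg_nonneg)
  then have "8 * pi\<^sup>2 * 4 ^ n * R \<le> 1000 ^ n * R"
    by (intro mult_right_mono eight_pi_sq_four_pow_le assms(1))
  then show "(cmod (bil n \<eta> \<beta> \<rho> (psi_iso_hat n l k e) (xi_hat n q)))\<^sup>2 \<le> 1000 ^ n *
            (\<eta>\<^sup>2 + (\<Sum>i<n. (\<beta> i)\<^sup>2) / qnorm2_sq n q + \<rho>\<^sup>2 / (qnorm2_sq n q)\<^sup>2) *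
            min ((1 + 2 powr (2 * (- real n / 2 + 2 * real (qnorm0 n q) - 1) * real L))
                   * qnorm2_sq n q / qhat_pow n q 4)
                (2 powr (- (real n - real (qnorm0 n q)) * real l0) * qnorm2_sq n q
                   / ((qnorm_inf n q)\<^sup>2 * qhat_pow n q 1))"
    if "(l, k, e) \<in> J_iso n l0 L" for l k e
    using cmod_bil_sq_le[OF that q, where \<eta>=\<eta> and \<beta>=\<beta> and \<rho>=\<rho>]
    unfolding R_def by (simp only: mult.assoc)
qed

theorem theorem4p11:
  "\<exists>K>0. \<forall>n l0 L \<eta> \<rho> (\<beta> :: nat \<Rightarrow> real).
     1 < n \<and> 2 \<le> l0 \<and> l0 < L \<longrightarrow>
       mu n l0 L \<eta> \<beta> \<rho> (\<lambda>_. 0) \<le> K ^ n * \<rho>\<^sup>2 * 2 powr (- ((2 + real n) * real l0))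
     \<and> (\<forall>q :: nat \<Rightarrow> int. (\<exists>i<n. q i \<noteq> 0) \<longrightarrow>
          mu n l0 L \<eta> \<beta> \<rho> q \<le> K ^ n *
            (\<eta>\<^sup>2 + (\<Sum>i<n. (\<beta> i)\<^sup>2) / qnorm2_sq n q + \<rho>\<^sup>2 / (qnorm2_sq n q)\<^sup>2) *
            min ((1 + 2 powr (2 * (- real n / 2 + 2 * real (qnorm0 n q) - 1) * real L))
                   * qnorm2_sq n q / qhat_pow n q 4)
                (2 powr (- (real n - real (qnorm0 n q)) * real l0) * qnorm2_sq n q
                   / ((qnorm_inf n q)\<^sup>2 * qhat_pow n q 1)))"
  using mu_zero_mode_le mu_nonzero_mode_le
  by (intro exI[of _ 1000]) (simp add: less_imp_le_nat)

end
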